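(* Let $f,g_1,\dots,g_m,h_1,\dots,h_l\in\mathbb{R}[\mathbf{x}]$ and assume $R-\|\mathbf{x}\|_2^2\in\{g_1,\dots,g_m\}$ for some $R>0$. Then for every integer $k\ge k_{\min}$ the SOS semidefinite program $(\mathrm{SOS}_k)$ satisfies Slater's condition, i.e. there exist $\xi\in\mathbb{R}$, real symmetric positive definite matrices $\mathbf{G}_0$ (size $s(k)$), $\mathbf{G}_i$ (size $s(k-\lceil g_i\rceil)$, $i\in[m]$) and vectors $\mathbf{u}_j\in\mathbb{R}^{s(2(k-\lceil h_j\rceil))}$ satisfying its polynomial identity constraint. As a consequence, strong duality holds between $(\mathrm{SOS}_k)$ and $(\mathrm{MOM}_k)$, i.e. $\rho_k=\tau_k$, for every integer $k\ge k_{\min}$.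
   Context: $\mathbf{x}=(x_1,\dots,x_n)$; $\lceil p\rceil:=\lceil\deg(p)/2\rceil$; $\mathbb{N}^n_d:=\{\alpha\in\mathbb{N}^n:|\alpha|\le d\}$; $s(d):=\binom{n+d}{n}$; $\mathbf{v}_d=(\mathbf{x}^\alpha)_{\alpha\in\mathbb{N}^n_d}$; $k_{\min}:=\max\{\lceil f\rceil,\lceil g_i\rceil,\lceil h_j\rceil\}$. $(\mathrm{SOS}_k)$: $\rho_k:=\sup\{\xi:\ \mathbf{G}_i\succeq0,\ f-\xi=\mathbf{v}_k^\top\mathbf{G}_0\mathbf{v}_k+\sum_{i\in[m]}g_i\mathbf{v}_{k-\lceil g_i\rceil}^\top\mathbf{G}_i\mathbf{v}_{k-\lceil g_i\rceil}+\sum_{j\in[l]}h_j\mathbf{v}_{2(k-\lceil h_j\rceil)}^\top\mathbf{u}_j\}$, the supremum over $\xi\in\mathbb{R}$, symmetric $\mathbf{G}_0$ of size $s(k)$, $\mathbf{G}_i$ of size $s(k-\lceil g_i\rceil)$, and $\mathbf{u}_j\in\mathbb{R}^{s(2(k-\lceil h_j\rceil))}$, the equality being an identity of polynomials. $(\mathrm{MOM}_k)$: $\tau_k:=\inf\{L_{\mathbf{y}}(f):\ \mathbf{y}\in\mathbb{R}^{s(2k)},\ \mathbf{M}_k(\mathbf{y})\succeq0,\ y_{\mathbf{0}}=1,\ \mathbf{M}_{k-\lceil g_i\rceil}(g_i\mathbf{y})\succeq0\ (i\in[m]),\ \mathbf{M}_{k-\lceil h_j\rceil}(h_j\mathbf{y})=0\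 (j\in[l])\}$, where $\mathbf{y}=(y_\alpha)_{\alpha\in\mathbb{N}^n_{2k}}$, $L_{\mathbf{y}}(\sum_\alpha p_\alpha\mathbf{x}^\alpha)=\sum_\alpha p_\alpha y_\alpha$, $\mathbf{M}_d(\mathbf{y})=(y_{\alpha+\beta})_{\alpha,\beta\in\mathbb{N}^n_d}$, $\mathbf{M}_d(q\mathbf{y})=(\sum_\gamma q_\gamma y_{\alpha+\beta+\gamma})_{\alpha,\beta\in\mathbb{N}^n_d}$. *)

theory Defs
  imports "HOL-Library.Poly_Mapping" "HOL-Library.Extended_Real"
begin

(* Multivariate real polynomials: a monomial x^alpha is an exponent vector
   alpha :: nat =>0 nat (variable index => exponent), and a polynomial is a
   finitely supported map from monomials to real coefficients; multiplication
   is the convolution product of Poly_Mapping. *)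
type_synonym monom = "nat \<Rightarrow>\<^sub>0 nat"
type_synonym mpoly = "monom \<Rightarrow>\<^sub>0 real"

definition mdeg :: "monom \<Rightarrow> nat" where
  "mdeg \<alpha> = (\<Sum>i\<in>Poly_Mapping.keys \<alpha>. Poly_Mapping.lookup \<alpha> i)"

(* total degree (degree of zero polynomial = 0) *)
definition pdeg :: "mpoly \<Rightarrow> nat" where
  "pdeg p = Max (insert 0 (mdeg ` Poly_Mapping.keys p))"

(* \<lceil>p\<rceil> = \<lceil>deg p / 2\<rceil> *)
definition hdeg :: "mpoly \<Rightarrow> nat" where
  "hdeg p = (pdeg p + 1) div 2"

definition in_vars :: "nat \<Rightarrow> mpoly \<Rightarrow> bool" where
  "in_vars n p \<longleftrightarrow> (\<forall>\<alpha>\<in>Poly_Mapping.keys p. Poly_Mapping.keys \<alpha> \<subseteq> {..<n})"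

definition monset :: "nat \<Rightarrow> nat \<Rightarrow> monom set" where
  "monset n d = {\<alpha>. Poly_Mapping.keys \<alpha> \<subseteq> {..<n} \<and> mdeg \<alpha> \<le> d}"

definition xmon :: "monom \<Rightarrow> mpoly" where
  "xmon \<alpha> = Poly_Mapping.single \<alpha> 1"

definition const :: "real \<Rightarrow> mpoly" where
  "const c = Poly_Mapping.single 0 c"

definition sqnorm :: "nat \<Rightarrow> mpoly" where
  "sqnorm n = (\<Sum>i<n. xmon (Poly_Mapping.single i 2))"

(* v_d^T G v_d, G indexed by N^n_d x N^n_d *)
definition gram :: "nat \<Rightarrow> nat \<Rightarrow> (monom \<Rightarrow> monom \<Rightarrow> real) \<Rightarrow> mpoly" where
  "gram n d G = (\<Sum>\<alpha>\<in>monset n d. \<Sum>\<beta>\<in>monset n d. Poly_Mapping.single (\<alpha> + \<beta>) (G \<alpha> \<beta>))"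

definition lin :: "nat \<Rightarrow> nat \<Rightarrow> (monom \<Rightarrow> real) \<Rightarrow> mpoly" where
  "lin n d u = (\<Sum>\<alpha>\<in>monset n d. Poly_Mapping.single \<alpha> (u \<alpha>))"

definition symm_on :: "monom set \<Rightarrow> (monom \<Rightarrow> monom \<Rightarrow> real) \<Rightarrow> bool" where
  "symm_on A G \<longleftrightarrow> (\<forall>\<alpha>\<in>A. \<forall>\<beta>\<in>A. G \<alpha> \<beta> = G \<beta> \<alpha>)"

definition psd_on :: "monom set \<Rightarrow> (monom \<Rightarrow> monom \<Rightarrow> real) \<Rightarrow> bool" where
  "psd_on A G \<longleftrightarrow> symm_on A G \<and>
     (\<forall>c. (\<Sum>\<alpha>\<in>A. \<Sum>\<beta>\<in>A. c \<alpha> * G \<alpha> \<beta> * c \<beta>) \<ge> 0)"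

definition pd_on :: "monom set \<Rightarrow> (monom \<Rightarrow> monom \<Rightarrow> real) \<Rightarrow> bool" where
  "pd_on A G \<longleftrightarrow> symm_on A G \<and>
     (\<forall>c. (\<exists>\<alpha>\<in>A. c \<alpha> \<noteq> 0) \<longrightarrow> (\<Sum>\<alpha>\<in>A. \<Sum>\<beta>\<in>A. c \<alpha> * G \<alpha> \<beta> * c \<beta>) > 0)"

definition kmin :: "mpoly \<Rightarrow> (nat \<Rightarrow> mpoly) \<Rightarrow> nat \<Rightarrow> (nat \<Rightarrow> mpoly) \<Rightarrow> nat \<Rightarrow> nat" where
  "kmin f g m h l = Max ({hdeg f} \<union> hdeg ` g ` {..<m} \<union> hdeg ` h ` {..<l})"

definition sos_cert ::
  "nat \<Rightarrow> mpoly \<Rightarrow> (nat \<Rightarrow> mpoly) \<Rightarrow> nat \<Rightarrow> (nat \<Rightarrow> mpoly) \<Rightarrow> nat \<Rightarrow> nat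
   \<Rightarrow> real \<Rightarrow> (nat \<Rightarrow> monom \<Rightarrow> monom \<Rightarrow> real) \<Rightarrow> (nat \<Rightarrow> monom \<Rightarrow> real) \<Rightarrow> bool" where
  "sos_cert n f g m h l k \<xi> G u \<longleftrightarrow>
     f - const \<xi> = gram n k (G 0)
       + (\<Sum>i<m. g i * gram n (k - hdeg (g i)) (G (Suc i)))
       + (\<Sum>j<l. h j * lin n (2 * (k - hdeg (h j))) (u j))"

(* G 0 = G_0, G (Suc i) = G_{i+1} for the i-th constraint g i *)
definition rho ::
  "nat \<Rightarrow> mpoly \<Rightarrow> (nat \<Rightarrow> mpoly) \<Rightarrow> nat \<Rightarrow> (nat \<Rightarrow> mpoly) \<Rightarrow> nat \<Rightarrow> nat \<Rightarrow> ereal" where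
  "rho n f g m h l k = Sup (ereal ` {\<xi>. \<exists>G u.
      psd_on (monset n k) (G 0) \<and>
      (\<forall>i<m. psd_on (monset n (k - hdeg (g i))) (G (Suc i))) \<and>
      sos_cert n f g m h l k \<xi> G u})"

definition Lfun :: "(monom \<Rightarrow> real) \<Rightarrow> mpoly \<Rightarrow> real" where
  "Lfun y p = (\<Sum>\<alpha>\<in>Poly_Mapping.keys p. Poly_Mapping.lookup p \<alpha> * y \<alpha>)"

definition locm :: "mpoly \<Rightarrow> (monom \<Rightarrow> real) \<Rightarrow> monom \<Rightarrow> monom \<Rightarrow> real" where
  "locm q y \<alpha> \<beta> = (\<Sum>\<gamma>\<in>Poly_Mapping.keys q. Poly_Mapping.lookup q \<gamma> * y (\<alpha> + \<beta> + \<gamma>))"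

(* y ranges over R^{s(2k)}, realised as a function monom => real of which only
   the entries indexed by N^n_{2k} are used *)
definition tau ::
  "nat \<Rightarrow> mpoly \<Rightarrow> (nat \<Rightarrow> mpoly) \<Rightarrow> nat \<Rightarrow> (nat \<Rightarrow> mpoly) \<Rightarrow> nat \<Rightarrow> nat \<Rightarrow> ereal" where
  "tau n f g m h l k = Inf (ereal ` {Lfun y f | y.
      psd_on (monset n k) (\<lambda>\<alpha> \<beta>. y (\<alpha> + \<beta>)) \<and>
      y 0 = 1 \<and>
      (\<forall>i<m. psd_on (monset n (k - hdeg (g i))) (locm (g i) y)) \<and>
      (\<forall>j<l. \<forall>\<alpha>\<in>monset n (k - hdeg (h j)). \<forall>\<beta>\<in>monset n (k - hdeg (h j)).
           locm (h j) y \<alpha> \<beta> = 0)})"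

end

theory Submission
  imports Defs
begin

(* Let g_i0 = R - |x|^2. For small eps > 0 the polynomial
     (R + 1) - (R - |x|^2) * sum_{|a| <= k-1} eps^|a| x^(2a)
   equals sum_{|b| <= k} theta_b x^(2b) with all theta_b > 0, so the constant R + 1 has a
   certificate whose Gram matrices are positive definite. Adding a large multiple of it to any
   certificate of a polynomial p of degree <= 2k (with a symmetric, not necessarily definite, Gram
   matrix) gives such a certificate for t + p, t large; for p = f this is Slater's condition.
   With p = +-x^b it shows that the cone generated by the truncated quadratic module Q and rho - f
   (rho the optimal value) is Archimedean in the finite-dimensional space of polynomials of degree
   <= 2k. It contains no negative constant, so by M. Riesz's extension theorem some L_y with y_0 = 1
   is nonnegative on it. Nonnegativity on Q says exactly that y is feasible for the moment problem,
   and L_y(rho - f) >= 0 bounds its value by rho; the reverse inequality is weak duality, which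
   rests on Fejer's trace theorem. *)

lemma mpoly_eq_sum_single: "(p::mpoly) = (\<Sum>\<gamma>\<in>Poly_Mapping.keys p. Poly_Mapping.single \<gamma> (Poly_Mapping.lookup p \<gamma>))"
proof (rule poly_mapping_eqI)
  fix \<alpha>
  show "Poly_Mapping.lookup p \<alpha> =
      Poly_Mapping.lookup (\<Sum>\<gamma>\<in>Poly_Mapping.keys p. Poly_Mapping.single \<gamma> (Poly_Mapping.lookup p \<gamma>)) \<alpha>"
    unfolding lookup_sum lookup_single
    by (cases "\<alpha> \<in> Poly_Mapping.keys p") (auto simp: when_def in_keys_iff)
qed

lemma mult_single_right:
  "(q::mpoly) * Poly_Mapping.single \<delta> c =
     (\<Sum>\<gamma>\<in>Poly_Mapping.keys q. Poly_Mapping.single (\<gamma> + \<delta>) (Poly_Mapping.lookup q \<gamma> * c))"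
  by (subst mpoly_eq_sum_single[of q]) (simp add: sum_distrib_right mult_single)

lemma single_sum: "Poly_Mapping.single \<alpha> (\<Sum>x\<in>S. c x) = (\<Sum>x\<in>S. Poly_Mapping.single \<alpha> (c x :: real))"
  by (induction S rule: infinite_finite_induct) (auto simp: single_add)

lemma sum_single_indicator:
  assumes "finite S" "a \<in> S"
  shows "(\<Sum>b\<in>S. Poly_Mapping.single (\<phi> b) (if b = a then v else 0)) = Poly_Mapping.single (\<phi> a) (v::real)"
proof -
  have "Poly_Mapping.single (\<phi> b) (if b = a then v else 0) = (if b = a then Poly_Mapping.single (\<phi> a) v else 0)" for b
    by simp
  then show ?thesis using assms by simp
qed

lemma const_add: "const (a + b) = const a + const b"
  by (simp add: const_def single_add)

lemma const_diff: "const (a - b) = const a - const b"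
  by (simp add: const_def single_diff)

lemma const_uminus: "const (- a) = - const a"
  by (simp add: const_def single_uminus)

lemma const_zero [simp]: "const 0 = 0"
  by (simp add: const_def)

lemma const_one [simp]: "const 1 = 1"
  by (simp add: const_def)

lemma const_mult_const: "const a * const b = const (a * b)"
  by (simp add: const_def mult_single)

lemma const_mult_single: "const c * Poly_Mapping.single \<alpha> v = Poly_Mapping.single \<alpha> (c * v)"
  by (simp add: const_def mult_single)

lemma lookup_const_mult [simp]: "Poly_Mapping.lookup (const c * p) \<alpha> = c * Poly_Mapping.lookup p \<alpha>"
proof -
  have eq: "const c * p = (\<Sum>\<gamma>\<in>Poly_Mapping.keys p. Poly_Mapping.single \<gamma> (c * Poly_Mapping.lookup p \<gamma>))"
    by (simp add: const_def mult.commute[of "Poly_Mapping.single 0 c"] mult_single_right mult.commute)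
  show ?thesis
    unfolding eq lookup_sum lookup_single
    by (cases "\<alpha> \<in> Poly_Mapping.keys p") (auto simp: when_def in_keys_iff)
qed

lemma keys_const_mult: "Poly_Mapping.keys (const c * p) \<subseteq> Poly_Mapping.keys p"
  by (auto simp: in_keys_iff)

lemma keys_const_eq_zero: "Poly_Mapping.keys q \<subseteq> {0} \<Longrightarrow> q = const (Poly_Mapping.lookup q 0)"
  by (rule poly_mapping_eqI) (auto simp: const_def lookup_single when_def in_keys_iff)

lemma keys_add_subset: "Poly_Mapping.keys p \<subseteq> A \<Longrightarrow> Poly_Mapping.keys q \<subseteq> A \<Longrightarrow> Poly_Mapping.keys (p + q) \<subseteq> A"
  using keys_add[of p q] by blast

lemma keys_diff_subset:
  "Poly_Mapping.keys (p::mpoly) \<subseteq> A \<Longrightarrow> Poly_Mapping.keys q \<subseteq> A \<Longrightarrow> Poly_Mapping.keys (p - q) \<subseteq> A"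
  using keys_add_subset[of p A "- q"] by simp

lemma keys_sum_subset:
  "(\<And>s. s \<in> S \<Longrightarrow> Poly_Mapping.keys (F s) \<subseteq> A) \<Longrightarrow> Poly_Mapping.keys (sum F S) \<subseteq> A"
  using keys_sum[of F S] by blast

lemma Lfun_eq_sum_superset:
  assumes "finite A" "Poly_Mapping.keys p \<subseteq> A"
  shows "Lfun y p = (\<Sum>\<alpha>\<in>A. Poly_Mapping.lookup p \<alpha> * y \<alpha>)"
  unfolding Lfun_def by (rule sum.mono_neutral_left) (use assms in \<open>auto simp: in_keys_iff\<close>)

lemma Lfun_zero [simp]: "Lfun y 0 = 0"
  by (simp add: Lfun_def)

lemma Lfun_single [simp]: "Lfun y (Poly_Mapping.single \<alpha> c) = c * y \<alpha>"
  by (simp add: Lfun_def)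

lemma Lfun_const: "Lfun y (const c) = c * y 0"
  by (simp add: const_def)

lemma Lfun_add: "Lfun y (p + q) = Lfun y p + Lfun y q"
proof -
  let ?A = "Poly_Mapping.keys p \<union> Poly_Mapping.keys q"
  have "Poly_Mapping.keys (p + q) \<subseteq> ?A"
    by (rule keys_add)
  then show ?thesis
    by (simp add: Lfun_eq_sum_superset[of ?A] lookup_add distrib_right sum.distrib)
qed

lemma Lfun_sum: "Lfun y (sum F S) = (\<Sum>s\<in>S. Lfun y (F s))"
  by (induction S rule: infinite_finite_induct) (auto simp: Lfun_add)

lemma Lfun_uminus: "Lfun y (- p) = - Lfun y p"
  by (simp add: Lfun_def sum_negf)

lemma Lfun_diff: "Lfun y (p - q) = Lfun y p - Lfun y q"
  using Lfun_add[of y p "- q"] by (simp add: Lfun_uminus)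

lemma Lfun_const_mult: "Lfun y (const c * p) = c * Lfun y p"
proof -
  have "Lfun y (const c * p) = (\<Sum>\<alpha>\<in>Poly_Mapping.keys p. Poly_Mapping.lookup (const c * p) \<alpha> * y \<alpha>)"
    by (rule Lfun_eq_sum_superset[OF finite_keys keys_const_mult])
  then show ?thesis
    by (simp add: Lfun_def sum_distrib_left mult.assoc)
qed

lemma Lfun_mult_single:
  "Lfun y ((q::mpoly) * Poly_Mapping.single \<delta> c) =
     c * (\<Sum>\<gamma>\<in>Poly_Mapping.keys q. Poly_Mapping.lookup q \<gamma> * y (\<gamma> + \<delta>))"
  by (simp add: mult_single_right Lfun_sum sum_distrib_left mult_ac)

lemma Lfun_upd_notin_keys: "\<alpha> \<notin> Poly_Mapping.keys p \<Longrightarrow> Lfun (y(\<alpha> := t)) p = Lfun y p"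
  unfolding Lfun_def by (intro sum.cong refl) auto

lemma mdeg_eq_sum_superset:
  assumes "finite S" "Poly_Mapping.keys \<alpha> \<subseteq> S"
  shows "mdeg \<alpha> = (\<Sum>i\<in>S. Poly_Mapping.lookup \<alpha> i)"
  unfolding mdeg_def by (rule sum.mono_neutral_left) (use assms in \<open>auto simp: in_keys_iff\<close>)

lemma mdeg_add: "mdeg (\<alpha> + \<beta>) = mdeg \<alpha> + mdeg \<beta>"
proof -
  let ?S = "Poly_Mapping.keys \<alpha> \<union> Poly_Mapping.keys \<beta>"
  have "Poly_Mapping.keys (\<alpha> + \<beta>) \<subseteq> ?S"
    by (rule keys_add)
  then show ?thesis
    by (simp add: mdeg_eq_sum_superset[of ?S] lookup_add sum.distrib)
qed

lemma mdeg_zero [simp]: "mdeg 0 = 0"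
  by (simp add: mdeg_def)

lemma mdeg_single [simp]: "mdeg (Poly_Mapping.single i d) = d"
  by (simp add: mdeg_def)

lemma mdeg_eq_0_iff [simp]: "mdeg \<alpha> = 0 \<longleftrightarrow> \<alpha> = 0"
  unfolding mdeg_def by (auto simp: in_keys_iff intro: poly_mapping_eqI)

lemma monom_remove_var:
  assumes "i \<in> Poly_Mapping.keys \<alpha>"
  defines "\<alpha>' \<equiv> \<alpha> - Poly_Mapping.single i 1"
  shows "\<alpha> = \<alpha>' + Poly_Mapping.single i 1" "Poly_Mapping.keys \<alpha>' \<subseteq> Poly_Mapping.keys \<alpha>"
    and "mdeg \<alpha> = Suc (mdeg \<alpha>')"
proof -
  have "Poly_Mapping.lookup \<alpha> i \<ge> 1"
    using assms(1) by (simp add: in_keys_iff)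
  then show eq: "\<alpha> = \<alpha>' + Poly_Mapping.single i 1"
    by (intro poly_mapping_eqI) (auto simp: \<alpha>'_def lookup_add lookup_minus lookup_single when_def)
  show "Poly_Mapping.keys \<alpha>' \<subseteq> Poly_Mapping.keys \<alpha>"
    by (auto simp: \<alpha>'_def in_keys_iff lookup_minus)
  show "mdeg \<alpha> = Suc (mdeg \<alpha>')"
    by (subst eq) (simp add: mdeg_add)
qed

lemma finite_monset: "finite (monset n d)"
proof -
  let ?F = "{f. \<forall>x. (x \<in> {..<n} \<longrightarrow> f x \<in> {0..d}) \<and> (x \<notin> {..<n} \<longrightarrow> f x = (0::nat))}"
  have "Poly_Mapping.lookup \<alpha> x \<le> d" if "\<alpha> \<in> monset n d" for \<alpha> x
  proof (cases "x \<in> Poly_Mapping.keys \<alpha>")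
    case True
    then have "Poly_Mapping.lookup \<alpha> x \<le> mdeg \<alpha>"
      unfolding mdeg_def by (intro member_le_sum) auto
    with that show ?thesis by (auto simp: monset_def)
  qed (simp add: in_keys_iff)
  then have "Poly_Mapping.lookup ` monset n d \<subseteq> ?F"
    by (auto simp: monset_def in_keys_iff)
  moreover have "finite ?F"
    by (rule finite_set_of_finite_funs) auto
  moreover have "inj_on Poly_Mapping.lookup (monset n d)"
    by (auto simp: inj_on_def poly_mapping.lookup_inject)
  ultimately show ?thesis
    using finite_image_iff finite_subset by blast
qed

lemma zero_in_monset [simp]: "0 \<in> monset n d"
  by (simp add: monset_def)

lemma single_in_monset: "i < n \<Longrightarrow> e \<le> d \<Longrightarrow> Poly_Mapping.single i e \<in> monset n d"
  by (simp add: monset_def)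

lemma monset_add: "\<alpha> \<in> monset n a \<Longrightarrow> \<beta> \<in> monset n b \<Longrightarrow> \<alpha> + \<beta> \<in> monset n (a + b)"
  using keys_add[of \<alpha> \<beta>] by (auto simp: monset_def mdeg_add)

lemma monset_mono: "a \<le> b \<Longrightarrow> monset n a \<subseteq> monset n b"
  by (auto simp: monset_def)

lemma monset_0: "monset 0 d = {0}"
  by (auto simp: monset_def)

lemma monset_split:
  "\<gamma> \<in> monset n (a + b) \<Longrightarrow> \<exists>\<alpha>\<in>monset n a. \<exists>\<beta>\<in>monset n b. \<gamma> = \<alpha> + \<beta>"
proof (induction "mdeg \<gamma>" arbitrary: \<gamma>)
  case 0
  then show ?case
    by (metis add_0 mdeg_eq_0_iff zero_in_monset)
next
  case (Suc d)
  then obtain i where i: "i \<in> Poly_Mapping.keys \<gamma>"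
    by (metis ex_in_conv keys_eq_empty mdeg_eq_0_iff nat.simps(3))
  define \<gamma>' where "\<gamma>' = \<gamma> - Poly_Mapping.single i 1"
  note \<gamma>' = monom_remove_var[OF i, folded \<gamma>'_def]
  have "\<gamma>' \<in> monset n (a + b)"
    using Suc.prems \<gamma>' by (auto simp: monset_def)
  moreover have "d = mdeg \<gamma>'"
    using Suc.hyps(2) \<gamma>'(3) by simp
  ultimately obtain \<alpha> \<beta> where \<alpha>\<beta>: "\<alpha> \<in> monset n a" "\<beta> \<in> monset n b" "\<gamma>' = \<alpha> + \<beta>"
    using Suc.hyps(1) by blast
  have e: "Poly_Mapping.single i 1 \<in> monset n 1"
    using i Suc.prems by (auto simp: monset_def)
  have "mdeg \<alpha> < a \<or> mdeg \<beta> < b"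
    using Suc.prems \<gamma>' \<alpha>\<beta> by (auto simp: monset_def mdeg_add)
  then show ?case
  proof
    assume "mdeg \<alpha> < a"
    then have "\<alpha> + Poly_Mapping.single i 1 \<in> monset n a"
      using monset_add[OF _ e, of \<alpha> "mdeg \<alpha>"] \<alpha>\<beta>(1) monset_mono[of "mdeg \<alpha> + 1" a n]
      by (auto simp: monset_def)
    with \<alpha>\<beta> \<gamma>' show ?thesis
      by (metis add.assoc add.commute)
  next
    assume "mdeg \<beta> < b"
    then have "\<beta> + Poly_Mapping.single i 1 \<in> monset n b"
      using monset_add[OF _ e, of \<beta> "mdeg \<beta>"] \<alpha>\<beta>(2) monset_mono[of "mdeg \<beta> + 1" b n]
      by (auto simp: monset_def)
    with \<alpha>\<beta> \<gamma>' show ?thesis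
      by (metis add.assoc)
  qed
qed

lemma gram_add: "gram n d (\<lambda>a b. G a b + G' a b) = gram n d G + gram n d G'"
  by (simp add: gram_def single_add sum.distrib)

lemma gram_scale: "gram n d (\<lambda>a b. c * G a b) = const c * gram n d G"
  by (simp add: gram_def sum_distrib_left const_mult_single)

lemma gram_zero [simp]: "gram n d (\<lambda>a b. 0) = 0"
  by (simp add: gram_def)

lemma gram_sum: "gram n d (\<lambda>a b. \<Sum>\<gamma>\<in>S. F \<gamma> a b) = (\<Sum>\<gamma>\<in>S. gram n d (F \<gamma>))"
  by (induction S rule: infinite_finite_induct) (simp_all add: gram_add)

lemma gram_single_entry:
  assumes "\<alpha> \<in> monset n d" "\<beta> \<in> monset n d"
  shows "gram n d (\<lambda>a b. if a = \<alpha> \<and> b = \<beta> then c else 0) = Poly_Mapping.single (\<alpha> + \<beta>) c"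
proof -
  have "Poly_Mapping.single (a + b) (if a = \<alpha> \<and> b = \<beta> then c else 0) =
      (if b = \<beta> then if a = \<alpha> then Poly_Mapping.single (\<alpha> + \<beta>) c else 0 else 0)" for a b
    by simp
  then show ?thesis
    using assms finite_monset by (simp add: gram_def)
qed

(* Each coefficient of p is split evenly between two mirrored entries, so the matrix is symmetric. *)

lemma exists_symm_gram:
  assumes "Poly_Mapping.keys p \<subseteq> monset n (2 * d)"
  shows "\<exists>A. symm_on (monset n d) A \<and> gram n d A = p"
proof -
  have "\<exists>\<alpha>\<beta>. fst \<alpha>\<beta> \<in> monset n d \<and> snd \<alpha>\<beta> \<in> monset n d \<and> \<gamma> = fst \<alpha>\<beta> + snd \<alpha>\<beta>"
    if "\<gamma> \<in> Poly_Mapping.keys p" for \<gamma>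
    using monset_split[of \<gamma> n d d] that assms by (auto simp: mult_2)
  then obtain sp where sp: "\<And>\<gamma>. \<gamma> \<in> Poly_Mapping.keys p \<Longrightarrow>
      fst (sp \<gamma>) \<in> monset n d \<and> snd (sp \<gamma>) \<in> monset n d \<and> \<gamma> = fst (sp \<gamma>) + snd (sp \<gamma>)"
    by metis
  define E where "E = (\<lambda>\<gamma> a b. if a = fst (sp \<gamma>) \<and> b = snd (sp \<gamma>) then Poly_Mapping.lookup p \<gamma> / 2 else 0)"
  define A where "A = (\<lambda>a b. \<Sum>\<gamma>\<in>Poly_Mapping.keys p. E \<gamma> a b + E \<gamma> b a)"
  have "symm_on (monset n d) A"
    by (simp add: A_def symm_on_def add.commute)
  moreover have "gram n d (\<lambda>a b. E \<gamma> a b + E \<gamma> b a) = Poly_Mapping.single \<gamma> (Poly_Mapping.lookup p \<gamma>)"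
    if "\<gamma> \<in> Poly_Mapping.keys p" for \<gamma>
  proof -
    have "(\<lambda>a b. E \<gamma> b a) = (\<lambda>a b. if a = snd (sp \<gamma>) \<and> b = fst (sp \<gamma>) then Poly_Mapping.lookup p \<gamma> / 2 else 0)"
      by (auto simp: E_def fun_eq_iff)
    then have "gram n d (\<lambda>a b. E \<gamma> a b + E \<gamma> b a) =
        Poly_Mapping.single \<gamma> (Poly_Mapping.lookup p \<gamma> / 2) + Poly_Mapping.single \<gamma> (Poly_Mapping.lookup p \<gamma> / 2)"
      unfolding gram_add using sp[OF that]
      by (simp add: E_def gram_single_entry add.commute)
    then show ?thesis
      by (simp add: single_add[symmetric])
  qed
  then have "gram n d A = p"
    unfolding A_def gram_sum by (simp add: mpoly_eq_sum_single[of p, symmetric] cong: sum.cong)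
  ultimately show ?thesis
    by blast
qed

definition diag_mat :: "(monom \<Rightarrow> real) \<Rightarrow> monom \<Rightarrow> monom \<Rightarrow> real" where
  "diag_mat c a b = (if a = b then c a else 0)"

lemma gram_diag_mat: "gram n d (diag_mat c) = (\<Sum>a\<in>monset n d. Poly_Mapping.single (a + a) (c a))"
proof -
  have "Poly_Mapping.single (a + b) (diag_mat c a b) = (if b = a then Poly_Mapping.single (a + a) (c a) else 0)" for a b
    by (simp add: diag_mat_def)
  then show ?thesis
    using finite_monset by (simp add: gram_def)
qed

lemma lin_add: "lin n d (\<lambda>a. u a + u' a) = lin n d u + lin n d u'"
  by (simp add: lin_def single_add sum.distrib)

lemma lin_scale: "lin n d (\<lambda>a. c * u a) = const c * lin n d u"
  by (simp add: lin_def sum_distrib_left const_mult_single)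

lemma lin_zero [simp]: "lin n d (\<lambda>a. 0) = 0"
  by (simp add: lin_def)

lemma Lfun_gram: "Lfun y (gram n d G) = (\<Sum>\<alpha>\<in>monset n d. \<Sum>\<beta>\<in>monset n d. G \<alpha> \<beta> * y (\<alpha> + \<beta>))"
  by (simp add: gram_def Lfun_sum)

lemma Lfun_mult_gram:
  "Lfun y (q * gram n d G) = (\<Sum>\<alpha>\<in>monset n d. \<Sum>\<beta>\<in>monset n d. G \<alpha> \<beta> * locm q y \<alpha> \<beta>)"
  by (simp add: gram_def sum_distrib_left Lfun_sum Lfun_mult_single locm_def add.commute)

lemma Lfun_mult_lin:
  "Lfun y (q * lin n d u) =
     (\<Sum>\<alpha>\<in>monset n d. u \<alpha> * (\<Sum>\<gamma>\<in>Poly_Mapping.keys q. Poly_Mapping.lookup q \<gamma> * y (\<gamma> + \<alpha>)))"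
  by (simp add: lin_def sum_distrib_left Lfun_sum Lfun_mult_single)

lemma keys_const_subset_monset: "Poly_Mapping.keys (const c) \<subseteq> monset n d"
  by (simp add: const_def)

lemma keys_mult_subset_monset:
  assumes "Poly_Mapping.keys p \<subseteq> monset n a" "Poly_Mapping.keys q \<subseteq> monset n b"
  shows "Poly_Mapping.keys (p * q) \<subseteq> monset n (a + b)"
  using keys_mult[of p q] assms monset_add by blast

lemma keys_gram: "Poly_Mapping.keys (gram n d G) \<subseteq> monset n (2 * d)"
  unfolding gram_def by (intro keys_sum_subset) (auto dest: monset_add simp: mult_2)

lemma keys_lin: "Poly_Mapping.keys (lin n d u) \<subseteq> monset n d"
  unfolding lin_def by (intro keys_sum_subset) auto

lemma keys_subset_monset_iff:
  "in_vars n p \<Longrightarrow> Poly_Mapping.keys p \<subseteq> monset n D \<longleftrightarrow> pdeg p \<le> D"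
  by (auto simp: in_vars_def pdeg_def monset_def)

lemma keys_subset_monset_hdeg: "in_vars n p \<Longrightarrow> Poly_Mapping.keys p \<subseteq> monset n (2 * hdeg p)"
  by (simp add: keys_subset_monset_iff hdeg_def)

lemma keys_mult_gram_subset:
  assumes "in_vars n q" "hdeg q \<le> k"
  shows "Poly_Mapping.keys (q * gram n (k - hdeg q) G) \<subseteq> monset n (2 * k)"
proof -
  have "2 * hdeg q + 2 * (k - hdeg q) = 2 * k"
    using assms(2) by simp
  then show ?thesis
    using keys_mult_subset_monset[OF keys_subset_monset_hdeg[OF assms(1)] keys_gram[of n "k - hdeg q" G]]
    by simp
qed

lemma keys_mult_lin_subset:
  assumes "in_vars n q" "hdeg q \<le> k"
  shows "Poly_Mapping.keys (q * lin n (2 * (k - hdeg q)) u) \<subseteq> monset n (2 * k)"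
proof -
  have "2 * hdeg q + 2 * (k - hdeg q) = 2 * k"
    using assms(2) by simp
  then show ?thesis
    using keys_mult_subset_monset[OF keys_subset_monset_hdeg[OF assms(1)] keys_lin[of n "2 * (k - hdeg q)" u]]
    by simp
qed

section \<open>Positive semidefinite matrices\<close>

definition quad_form :: "monom set \<Rightarrow> (monom \<Rightarrow> monom \<Rightarrow> real) \<Rightarrow> (monom \<Rightarrow> real) \<Rightarrow> real" where
  "quad_form S A c = (\<Sum>a\<in>S. \<Sum>b\<in>S. c a * A a b * c b)"

lemma psd_on_iff: "psd_on S A \<longleftrightarrow> symm_on S A \<and> (\<forall>c. 0 \<le> quad_form S A c)"
  by (simp add: psd_on_def quad_form_def)

lemma pd_on_iff: "pd_on S A \<longleftrightarrow> symm_on S A \<and> (\<forall>c. (\<exists>a\<in>S. c a \<noteq> 0) \<longrightarrow> 0 < quad_form S A c)"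
  by (simp add: pd_on_def quad_form_def)

lemma quad_form_add:
  assumes "symm_on S A"
  shows "quad_form S A (\<lambda>a. c a + d a) =
    quad_form S A c + 2 * (\<Sum>a\<in>S. \<Sum>b\<in>S. c a * A a b * d b) + quad_form S A d"
proof -
  have "(\<Sum>a\<in>S. \<Sum>b\<in>S. d a * A a b * c b) = (\<Sum>a\<in>S. \<Sum>b\<in>S. c a * A a b * d b)"
    using assms by (subst sum.swap) (auto simp: symm_on_def mult_ac intro!: sum.cong)
  then show ?thesis
    by (simp add: quad_form_def algebra_simps sum.distrib)
qed

lemma quad_form_unit:
  assumes "finite S" "s \<in> S"
  shows "quad_form S A (\<lambda>a. if a = s then x else 0) = x\<^sup>2 * A s s"
proof -
  have "quad_form S A (\<lambda>a. if a = s then x else 0) =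
      (\<Sum>a\<in>S. if a = s then (\<Sum>b\<in>S. x * A s b * (if b = s then x else 0)) else 0)"
    unfolding quad_form_def by (intro sum.cong) auto
  then show ?thesis
    using assms by (simp add: if_distrib[of "\<lambda>t. _ * t"] power2_eq_square cong: if_cong)
qed

lemma quad_form_add_unit:
  assumes "finite S" "s \<in> S" "symm_on S A"
  shows "quad_form S A (\<lambda>a. c a + (if a = s then x else 0)) =
    quad_form S A c + 2 * x * (\<Sum>a\<in>S. c a * A a s) + x\<^sup>2 * A s s"
  by (subst quad_form_add[OF assms(3)])
    (use assms in \<open>simp add: quad_form_unit sum_distrib_left mult_ac if_distrib[of "\<lambda>t. _ * t"] cong: if_cong\<close>)

lemma psd_diag_nonneg: "psd_on S A \<Longrightarrow> finite S \<Longrightarrow> s \<in> S \<Longrightarrow> 0 \<le> A s s"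
  using quad_form_unit[of S s A 1] by (metis power_one mult_1 psd_on_iff)

lemma psd_row_eq_zero:
  assumes "psd_on S A" "finite S" "s \<in> S" "A s s = 0" "b \<in> S"
  shows "A s b = 0"
proof -
  have symm: "symm_on S A"
    using assms(1) by (simp add: psd_on_iff)
  let ?e = "\<lambda>a. if a = b then 1 else 0"
  have "(\<Sum>a\<in>S. ?e a * A a s) = A b s"
    using assms(2,5) by (simp add: if_distrib[of "\<lambda>t. t * _"] cong: if_cong)
  then have eq: "quad_form S A (\<lambda>a. ?e a + (if a = s then x else 0)) = A b b + 2 * x * A b s" for x
    using quad_form_add_unit[OF assms(2,3) symm, of ?e x] quad_form_unit[OF assms(2,5), of A 1] assms(4)
    by simp
  have nonneg: "0 \<le> A b b + 2 * x * A b s" for x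
    using assms(1) eq[of x] unfolding psd_on_iff by (metis (no_types, lifting))
  have "A b s = 0"
  proof (rule ccontr)
    assume "A b s \<noteq> 0"
    then have "A b b + 2 * (- (A b b + 1) / (2 * A b s)) * A b s = - 1"
      by (simp add: field_simps)
    with nonneg[of "- (A b b + 1) / (2 * A b s)"] show False
      by linarith
  qed
  with symm assms(3,5) show ?thesis
    by (simp add: symm_on_def)
qed

lemma psd_on_subset:
  assumes "psd_on S A" "finite S" "T \<subseteq> S"
  shows "psd_on T A"
proof -
  have "quad_form T A c = quad_form S A (\<lambda>a. if a \<in> T then c a else 0)" for c
  proof -
    let ?c = "\<lambda>a. if a \<in> T then c a else 0"
    have "quad_form S A ?c = (\<Sum>a\<in>T. \<Sum>b\<in>S. ?c a * A a b * ?c b)"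
      unfolding quad_form_def using assms(2,3) by (intro sum.mono_neutral_right) auto
    also have "\<dots> = (\<Sum>a\<in>T. \<Sum>b\<in>T. ?c a * A a b * ?c b)"
      using assms(2,3) by (intro sum.cong refl sum.mono_neutral_right) (auto intro: finite_subset)
    finally show ?thesis
      by (simp add: quad_form_def)
  qed
  with assms(1,3) show ?thesis
    by (auto simp: psd_on_iff symm_on_def subset_iff)
qed

lemma psd_schur_complement:
  assumes "psd_on S A" "finite S" "s \<in> S" "0 < A s s"
  shows "psd_on S (\<lambda>a b. A a b - A a s * A s b / A s s)"
proof -
  have symm: "symm_on S A"
    using assms(1) by (simp add: psd_on_iff)
  have "0 \<le> quad_form S (\<lambda>a b. A a b - A a s * A s b / A s s) c" for c
  proof -
    define v where "v = (\<Sum>a\<in>S. c a * A a s)"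
    have "(\<Sum>b\<in>S. A s b * c b) = v"
      unfolding v_def using symm assms(3) by (auto simp: symm_on_def mult.commute intro!: sum.cong)
    then have "v\<^sup>2 = (\<Sum>a\<in>S. \<Sum>b\<in>S. c a * A a s * (A s b * c b))"
      by (simp add: power2_eq_square sum_product[symmetric] v_def)
    then have "quad_form S (\<lambda>a b. A a b - A a s * A s b / A s s) c = quad_form S A c - v\<^sup>2 / A s s"
      by (simp add: quad_form_def algebra_simps sum_subtractf sum_divide_distrib)
    also have "\<dots> = quad_form S A (\<lambda>a. c a + (if a = s then - v / A s s else 0))"
    proof -
      have "2 * (- v / A s s) * v + (- v / A s s)\<^sup>2 * A s s = - v\<^sup>2 / A s s"
        using assms(4) by (simp add: power2_eq_square field_simps)
      then show ?thesis
        using quad_form_add_unit[OF assms(2,3) symm, of c "- v / A s s"] unfolding v_def by linarith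
    qed
    also have "\<dots> \<ge> 0"
      using assms(1) by (simp add: psd_on_iff)
    finally show ?thesis .
  qed
  moreover have "symm_on S (\<lambda>a b. A a b - A a s * A s b / A s s)"
    using symm assms(3) by (auto simp: symm_on_def)
  ultimately show ?thesis
    by (simp add: psd_on_iff)
qed

(* Fejer's trace theorem. Induction on S: after subtracting the rank-one part A_s A_s^T / A_ss
   (nothing if A_ss = 0) the row of s vanishes, so s can be dropped. *)

lemma psd_inner_nonneg:
  "finite S \<Longrightarrow> psd_on S A \<Longrightarrow> psd_on S B \<Longrightarrow> 0 \<le> (\<Sum>a\<in>S. \<Sum>b\<in>S. A a b * B a b)"
proof (induction S arbitrary: A rule: finite_induct)
  case empty
  then show ?case by simp
next
  case (insert s F)
  let ?S = "insert s F"
  have fin: "finite ?S"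
    using insert.hyps by simp
  have row_zero: "0 \<le> (\<Sum>a\<in>?S. \<Sum>b\<in>?S. A' a b * B a b)"
    if A': "psd_on ?S A'" and row: "\<forall>b\<in>?S. A' s b = 0" for A'
  proof -
    have "\<forall>a\<in>?S. A' a s = 0"
      using row A' by (auto simp: psd_on_iff symm_on_def)
    then have "(\<Sum>a\<in>?S. \<Sum>b\<in>?S. A' a b * B a b) = (\<Sum>a\<in>F. \<Sum>b\<in>F. A' a b * B a b)"
      using insert.hyps row by simp
    also have "\<dots> \<ge> 0"
      using insert.IH psd_on_subset[OF A' fin] psd_on_subset[OF insert.prems(2) fin] by blast
    finally show ?thesis .
  qed
  consider "A s s = 0" | "0 < A s s"
    using psd_diag_nonneg[OF insert.prems(1) fin insertI1] by linarith
  then show ?case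
  proof cases
    case 1
    then show ?thesis
      using psd_row_eq_zero[OF insert.prems(1) fin insertI1 1] by (intro row_zero[OF insert.prems(1)]) blast
  next
    case 2
    define A' where "A' = (\<lambda>a b. A a b - A a s * A s b / A s s)"
    have "0 \<le> (\<Sum>a\<in>?S. \<Sum>b\<in>?S. A' a b * B a b)"
      using psd_schur_complement[OF insert.prems(1) fin insertI1 2] 2 by (intro row_zero) (simp_all add: A'_def)
    moreover have "(\<Sum>a\<in>?S. \<Sum>b\<in>?S. A a s * A s b * B a b) = quad_form ?S B (\<lambda>a. A s a)"
      using insert.prems(1) by (auto simp: quad_form_def psd_on_iff symm_on_def mult_ac intro!: sum.cong)
    then have "0 \<le> (\<Sum>a\<in>?S. \<Sum>b\<in>?S. A a s * A s b * B a b) / A s s"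
      using insert.prems(2) 2 by (simp add: psd_on_iff)
    moreover have "(\<Sum>a\<in>?S. \<Sum>b\<in>?S. A a b * B a b) =
        (\<Sum>a\<in>?S. \<Sum>b\<in>?S. A' a b * B a b) + (\<Sum>a\<in>?S. \<Sum>b\<in>?S. A a s * A s b * B a b) / A s s"
      using 2 by (simp add: A'_def algebra_simps sum.distrib sum_subtractf sum_divide_distrib)
    ultimately show ?thesis
      by linarith
  qed
qed

lemma psd_rank_one: "psd_on S (\<lambda>a b. c a * c b)"
proof -
  have "quad_form S (\<lambda>a b. c a * c b) d = (\<Sum>a\<in>S. d a * c a)\<^sup>2" for d
    by (simp add: quad_form_def power2_eq_square sum_product mult_ac)
  then show ?thesis
    by (simp add: psd_on_iff symm_on_def mult.commute)
qed

lemma psd_zero: "psd_on S (\<lambda>a b. 0)"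
  by (simp add: psd_on_def symm_on_def)

lemma pd_imp_psd: "pd_on S A \<Longrightarrow> psd_on S A"
  unfolding pd_on_iff psd_on_iff quad_form_def
  by (metis (no_types, lifting) less_eq_real_def mult_eq_0_iff sum.neutral)

lemma quad_form_plus: "quad_form S (\<lambda>a b. A a b + B a b) c = quad_form S A c + quad_form S B c"
  by (simp add: quad_form_def algebra_simps sum.distrib)

lemma psd_add: "psd_on S A \<Longrightarrow> psd_on S B \<Longrightarrow> psd_on S (\<lambda>a b. A a b + B a b)"
  by (simp add: psd_on_iff quad_form_plus symm_on_def)

lemma pd_add_psd: "pd_on S A \<Longrightarrow> psd_on S B \<Longrightarrow> pd_on S (\<lambda>a b. A a b + B a b)"
  by (simp add: pd_on_iff psd_on_iff quad_form_plus symm_on_def add_pos_nonneg)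

lemma psd_scale: "psd_on S A \<Longrightarrow> 0 \<le> c \<Longrightarrow> psd_on S (\<lambda>a b. c * A a b)"
proof -
  have "quad_form S (\<lambda>a b. c * A a b) d = c * quad_form S A d" for d
    by (simp add: quad_form_def sum_distrib_left mult_ac)
  then show "psd_on S A \<Longrightarrow> 0 \<le> c \<Longrightarrow> psd_on S (\<lambda>a b. c * A a b)"
    by (simp add: psd_on_iff symm_on_def)
qed

lemma quad_form_diag_mat: "finite S \<Longrightarrow> quad_form S (diag_mat \<theta>) c = (\<Sum>a\<in>S. \<theta> a * (c a)\<^sup>2)"
  by (simp add: quad_form_def diag_mat_def power2_eq_square mult_ac if_distrib[of "\<lambda>t. _ * t"]
      if_distrib[of "\<lambda>t. t * _"] cong: if_cong)

lemma psd_diag_mat: "finite S \<Longrightarrow> (\<And>a. a \<in> S \<Longrightarrow> 0 \<le> \<theta> a) \<Longrightarrow> psd_on S (diag_mat \<theta>)"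
  by (simp add: psd_on_iff quad_form_diag_mat sum_nonneg symm_on_def diag_mat_def)

lemma pd_diag_mat:
  assumes "finite S" "\<And>a. a \<in> S \<Longrightarrow> 0 < \<theta> a"
  shows "pd_on S (diag_mat \<theta>)"
proof -
  have "0 < (\<Sum>a\<in>S. \<theta> a * (c a)\<^sup>2)" if "a \<in> S" "c a \<noteq> 0" for c a
    using that assms by (intro sum_pos2[of S a]) (auto simp: less_imp_le)
  then show ?thesis
    using assms(1) by (auto simp: pd_on_iff quad_form_diag_mat symm_on_def diag_mat_def)
qed

lemma quad_form_lower_bound:
  assumes "finite S"
  shows "- (\<Sum>a\<in>S. \<Sum>b\<in>S. \<bar>A a b\<bar>) * (\<Sum>a\<in>S. (c a)\<^sup>2) \<le> quad_form S A c"
proof -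
  let ?C = "\<Sum>a\<in>S. (c a)\<^sup>2"
  have sq: "(c a)\<^sup>2 \<le> ?C" if "a \<in> S" for a
    using assms that by (intro member_le_sum) auto
  have "- (\<bar>A a b\<bar> * ?C) \<le> c a * A a b * c b" if "a \<in> S" "b \<in> S" for a b
  proof -
    have "\<bar>c a\<bar> * \<bar>c b\<bar> \<le> ((c a)\<^sup>2 + (c b)\<^sup>2) / 2"
      using sum_squares_bound[of "\<bar>c a\<bar>" "\<bar>c b\<bar>"] by (simp add: power2_abs)
    also have "\<dots> \<le> ?C"
      using sq[OF that(1)] sq[OF that(2)] by simp
    finally have "\<bar>A a b\<bar> * (\<bar>c a\<bar> * \<bar>c b\<bar>) \<le> \<bar>A a b\<bar> * ?C"
      by (simp add: mult_left_mono)
    then have "\<bar>c a * A a b * c b\<bar> \<le> \<bar>A a b\<bar> * ?C"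
      by (simp add: abs_mult mult_ac)
    then show ?thesis
      by linarith
  qed
  then have "(\<Sum>a\<in>S. \<Sum>b\<in>S. - (\<bar>A a b\<bar> * ?C)) \<le> quad_form S A c"
    unfolding quad_form_def by (intro sum_mono) auto
  then show ?thesis
    by (simp add: sum_negf sum_distrib_right)
qed

lemma eventually_pd_plus_diag_mat:
  assumes "finite S" "symm_on S A" "\<And>a. a \<in> S \<Longrightarrow> t \<le> \<theta> a" "0 < t"
  shows "\<forall>\<^sub>F s in at_top. pd_on S (\<lambda>a b. A a b + s * diag_mat \<theta> a b)"
  using eventually_gt_at_top[of "(\<Sum>a\<in>S. \<Sum>b\<in>S. \<bar>A a b\<bar>) / t"]
proof eventually_elim
  case (elim s)
  let ?M = "\<Sum>a\<in>S. \<Sum>b\<in>S. \<bar>A a b\<bar>"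
  have "0 < quad_form S (\<lambda>a b. A a b + s * diag_mat \<theta> a b) c" if "a \<in> S" "c a \<noteq> 0" for a c
  proof -
    let ?C = "\<Sum>a\<in>S. (c a)\<^sup>2"
    have C: "0 < ?C"
      using assms(1) that by (intro sum_pos2[of S a]) auto
    have "0 \<le> ?M"
      by (simp add: sum_nonneg)
    then have s: "?M < s * t"
      using elim assms(4) by (simp add: field_simps)
    have "t * ?C \<le> (\<Sum>a\<in>S. \<theta> a * (c a)\<^sup>2)"
      unfolding sum_distrib_left using assms(3) by (intro sum_mono mult_right_mono) auto
    moreover have "0 \<le> s"
      using elim \<open>0 \<le> ?M\<close> assms(4) by (smt (verit) divide_nonneg_pos)
    ultimately have "s * t * ?C \<le> s * (\<Sum>a\<in>S. \<theta> a * (c a)\<^sup>2)"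
      by (simp add: mult.assoc mult_left_mono)
    moreover have "quad_form S (\<lambda>a b. A a b + s * diag_mat \<theta> a b) c =
        quad_form S A c + s * (\<Sum>a\<in>S. \<theta> a * (c a)\<^sup>2)"
      using assms(1) by (simp add: quad_form_plus quad_form_def diag_mat_def sum_distrib_left
          power2_eq_square mult_ac if_distrib[of "\<lambda>t. _ * t"] if_distrib[of "\<lambda>t. t * _"] cong: if_cong)
    moreover have "0 < (s * t - ?M) * ?C"
      using s C by simp
    ultimately show ?thesis
      using quad_form_lower_bound[OF assms(1), of A c] by (simp add: algebra_simps)
  qed
  with assms(2) show ?case
    by (auto simp: pd_on_iff symm_on_def diag_mat_def)
qed

section \<open>A positive definite certificate on the ball\<close>

lemma keys_sqnorm: "Poly_Mapping.keys (sqnorm n) \<subseteq> monset n 2"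
  unfolding sqnorm_def xmon_def by (intro keys_sum_subset) (auto simp: monset_def)

lemma hdeg_ball_poly:
  assumes "0 < n"
  shows "hdeg (const R - sqnorm n) = 1"
proof -
  let ?g = "const R - sqnorm n" and ?x0sq = "Poly_Mapping.single 0 2 :: monom"
  have "Poly_Mapping.single i (2::nat) = ?x0sq \<longleftrightarrow> i = 0" for i
    by (metis lookup_single_eq lookup_single_not_eq zero_neq_numeral)
  then have "Poly_Mapping.lookup (sqnorm n) ?x0sq = 1"
    unfolding sqnorm_def xmon_def lookup_sum lookup_single using assms
    by (simp add: when_def cong: if_cong)
  moreover have "?x0sq \<noteq> 0"
    by (metis lookup_single_eq lookup_zero zero_neq_numeral)
  ultimately have "?x0sq \<in> Poly_Mapping.keys ?g"
    by (simp add: in_keys_iff lookup_minus const_def lookup_single when_def)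
  then have "2 \<le> pdeg ?g"
    unfolding pdeg_def by (metis Max_ge finite_imageI finite_insert finite_keys image_eqI insertCI mdeg_single)
  moreover have "pdeg ?g \<le> 2"
    using keys_diff_subset[OF keys_const_subset_monset keys_sqnorm]
    by (auto simp: pdeg_def monset_def)
  ultimately show ?thesis
    by (simp add: hdeg_def)
qed

lemma const_eq_gram_diag_mat: "const v = gram n k (diag_mat (\<lambda>\<beta>. if \<beta> = 0 then v else 0))"
  using sum_single_indicator[OF finite_monset zero_in_monset, of "\<lambda>\<beta>. \<beta> + \<beta>" v n k]
  by (simp add: gram_diag_mat const_def)

lemma const_mult_gram_diag_mat:
  assumes "d \<le> k"
  shows "const v * gram n d (diag_mat c) = gram n k (diag_mat (\<lambda>\<beta>. if \<beta> \<in> monset n d then v * c \<beta> else 0))"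
proof -
  have "gram n k (diag_mat (\<lambda>\<beta>. if \<beta> \<in> monset n d then v * c \<beta> else 0)) =
      (\<Sum>\<beta>\<in>monset n k. if \<beta> \<in> monset n d then Poly_Mapping.single (\<beta> + \<beta>) (v * c \<beta>) else 0)"
    unfolding gram_diag_mat by (intro sum.cong refl) auto
  also have "\<dots> = (\<Sum>\<beta>\<in>monset n d. Poly_Mapping.single (\<beta> + \<beta>) (v * c \<beta>))"
    using monset_mono[OF assms, of n] by (simp add: sum.inter_restrict[symmetric] finite_monset Int_absorb1)
  finally show ?thesis
    by (simp add: gram_diag_mat sum_distrib_left const_mult_single)
qed

lemma sqnorm_mult_gram_diag_mat:
  assumes "monset n (Suc d) \<subseteq> monset n k"
  defines "e \<equiv> \<lambda>i. Poly_Mapping.single i (1::nat)"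
  shows "sqnorm n * gram n d (diag_mat c) =
    gram n k (diag_mat (\<lambda>\<beta>. \<Sum>i<n. \<Sum>\<alpha>\<in>monset n d. if \<beta> = \<alpha> + e i then c \<alpha> else 0))"
proof -
  let ?Mk = "monset n k" and ?Md = "monset n d"
  have shift: "\<alpha> + e i \<in> ?Mk" if "\<alpha> \<in> ?Md" "i < n" for \<alpha> i
    using monset_add[OF that(1) single_in_monset[OF that(2), of 1 1]] assms(1) by (auto simp: e_def)
  have "gram n k (diag_mat (\<lambda>\<beta>. \<Sum>i<n. \<Sum>\<alpha>\<in>?Md. if \<beta> = \<alpha> + e i then c \<alpha> else 0))
      = (\<Sum>i<n. \<Sum>\<alpha>\<in>?Md. \<Sum>\<beta>\<in>?Mk. Poly_Mapping.single (\<beta> + \<beta>) (if \<beta> = \<alpha> + e i then c \<alpha> else 0))"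
    unfolding gram_diag_mat single_sum by (subst sum.swap) (simp add: sum.swap[of _ ?Mk])
  also have "\<dots> = (\<Sum>i<n. \<Sum>\<alpha>\<in>?Md. Poly_Mapping.single ((\<alpha> + e i) + (\<alpha> + e i)) (c \<alpha>))"
    using shift by (intro sum.cong refl sum_single_indicator finite_monset) auto
  also have "\<dots> = (\<Sum>i<n. \<Sum>\<alpha>\<in>?Md. xmon (Poly_Mapping.single i 2) * Poly_Mapping.single (\<alpha> + \<alpha>) (c \<alpha>))"
  proof (intro sum.cong refl)
    fix i \<alpha>
    have "Poly_Mapping.single i (2::nat) = e i + e i"
      by (simp add: e_def single_add[symmetric] numeral_2_eq_2)
    then show "Poly_Mapping.single ((\<alpha> + e i) + (\<alpha> + e i)) (c \<alpha>) =
        xmon (Poly_Mapping.single i 2) * Poly_Mapping.single (\<alpha> + \<alpha>) (c \<alpha>)"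
      by (simp add: xmon_def mult_single algebra_simps)
  qed
  also have "\<dots> = sqnorm n * gram n d (diag_mat c)"
    by (simp add: sqnorm_def gram_diag_mat sum_distrib_left sum_distrib_right) (rule sum.swap)
  finally show ?thesis ..
qed

(* The coefficients of x^(2b) in (R + 1) - (R - |x|^2) * sum_{a in N^n_d} c_a x^(2a); the double sum
   collects the terms of |x|^2 x^(2a) = sum_i x^(2(a + e_i)). *)

definition ball_coeffs :: "nat \<Rightarrow> nat \<Rightarrow> real \<Rightarrow> (monom \<Rightarrow> real) \<Rightarrow> monom \<Rightarrow> real" where
  "ball_coeffs n d R c \<beta> = (if \<beta> = 0 then R + 1 else 0)
     + (\<Sum>i<n. \<Sum>\<alpha>\<in>monset n d. if \<beta> = \<alpha> + Poly_Mapping.single i 1 then c \<alpha> else 0)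
     - (if \<beta> \<in> monset n d then R * c \<beta> else 0)"

lemma ball_identity:
  assumes "monset n (Suc d) \<subseteq> monset n k" "d \<le> k"
  shows "const (R + 1) - (const R - sqnorm n) * gram n d (diag_mat c) = gram n k (diag_mat (ball_coeffs n d R c))"
proof -
  have "gram n k (diag_mat (ball_coeffs n d R c)) = gram n k (diag_mat (\<lambda>\<beta>. if \<beta> = 0 then R + 1 else 0))
      + gram n k (diag_mat (\<lambda>\<beta>. \<Sum>i<n. \<Sum>\<alpha>\<in>monset n d. if \<beta> = \<alpha> + Poly_Mapping.single i 1 then c \<alpha> else 0))
      - gram n k (diag_mat (\<lambda>\<beta>. if \<beta> \<in> monset n d then R * c \<beta> else 0))"
    by (simp add: gram_diag_mat ball_coeffs_def single_add single_diff sum.distrib sum_subtractf)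
  also have "\<dots> = const (R + 1) + sqnorm n * gram n d (diag_mat c) - const R * gram n d (diag_mat c)"
    by (simp add: const_eq_gram_diag_mat[symmetric] const_mult_gram_diag_mat[OF assms(2)]
        sqnorm_mult_gram_diag_mat[OF assms(1)])
  finally show ?thesis
    by (simp add: algebra_simps)
qed

(* For b <> 0 the double sum contains c_a = eps^(|b|-1) for b = a + e_i, which dominates the
   subtracted R eps^|b| since R eps <= 1/2. *)

lemma ball_coeffs_lower_bound:
  assumes "0 < R" "n = 0 \<or> Suc d = k" "\<beta> \<in> monset n k"
  defines "\<epsilon> \<equiv> min 1 (1 / (2 * R))"
  shows "\<epsilon> ^ k / 2 \<le> ball_coeffs n d R (\<lambda>\<alpha>. \<epsilon> ^ mdeg \<alpha>) \<beta>"
proof -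
  define D where "D = (\<Sum>i<n. \<Sum>\<alpha>\<in>monset n d. if \<beta> = \<alpha> + Poly_Mapping.single i 1 then \<epsilon> ^ mdeg \<alpha> else 0)"
  have \<epsilon>: "0 < \<epsilon>" "\<epsilon> \<le> 1" "R * \<epsilon> \<le> 1 / 2"
    using assms(1) by (auto simp: \<epsilon>_def min_def field_simps)
  then have "0 \<le> D"
    by (auto simp: D_def intro!: sum_nonneg)
  show ?thesis
  proof (cases "\<beta> = 0")
    case True
    then show ?thesis
      using \<open>0 \<le> D\<close> \<epsilon> power_le_one[of \<epsilon> k] by (simp add: ball_coeffs_def D_def)
  next
    case False
    then obtain i where i: "i \<in> Poly_Mapping.keys \<beta>"
      by (metis ex_in_conv keys_eq_empty)
    define \<alpha> where "\<alpha> = \<beta> - Poly_Mapping.single i 1"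
    note \<alpha> = monom_remove_var[OF i, folded \<alpha>_def]
    have "i < n"
      using i assms(3) by (auto simp: monset_def)
    with assms(2,3) \<alpha> have \<alpha>_in: "\<alpha> \<in> monset n d"
      by (auto simp: monset_def)
    have "\<epsilon> ^ mdeg \<alpha> = (\<Sum>\<alpha>'\<in>monset n d. if \<beta> = \<alpha>' + Poly_Mapping.single i 1 then \<epsilon> ^ mdeg \<alpha>' else 0)"
      using \<alpha>(1) \<alpha>_in by (simp add: finite_monset cong: if_cong)
    also have "\<dots> \<le> D"
      unfolding D_def using \<open>i < n\<close> \<epsilon>(1) by (intro member_le_sum[of i "{..<n}"] sum_nonneg) auto
    finally have "\<epsilon> ^ mdeg \<alpha> \<le> D" .
    moreover have "(if \<beta> \<in> monset n d then R * \<epsilon> ^ mdeg \<beta> else 0) \<le> \<epsilon> ^ mdeg \<alpha> / 2"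
      using \<alpha>(3) \<epsilon> mult_right_mono[OF \<epsilon>(3), of "\<epsilon> ^ mdeg \<alpha>"] by (simp add: mult_ac)
    moreover have "\<epsilon> ^ k \<le> \<epsilon> ^ mdeg \<alpha>"
      using \<epsilon> \<alpha>(3) assms(3) by (intro power_decreasing) (auto simp: monset_def)
    ultimately show ?thesis
      using False by (simp add: ball_coeffs_def D_def)
  qed
qed

section \<open>M. Riesz extension\<close>

locale poly_cone =
  fixes K :: "mpoly set"
  assumes add_mem: "p \<in> K \<Longrightarrow> q \<in> K \<Longrightarrow> p + q \<in> K"
    and const_mult_mem: "p \<in> K \<Longrightarrow> 0 \<le> c \<Longrightarrow> const c * p \<in> K"
begin

lemma poly_cone_add_ray: "poly_cone {q + const s * r | q s. q \<in> K \<and> 0 \<le> s}"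
proof
  fix p p' assume "p \<in> {q + const s * r | q s. q \<in> K \<and> 0 \<le> s}" "p' \<in> {q + const s * r | q s. q \<in> K \<and> 0 \<le> s}"
  then obtain q s q' s' where "p = q + const s * r" "p' = q' + const s' * r" "q \<in> K" "q' \<in> K" "0 \<le> s" "0 \<le> s'"
    by blast
  moreover have "q + const s * r + (q' + const s' * r) = (q + q') + const (s + s') * r"
    by (simp add: const_add algebra_simps)
  ultimately show "p + p' \<in> {q + const s * r | q s. q \<in> K \<and> 0 \<le> s}"
    using add_mem by fastforce
next
  fix p and c :: real assume "p \<in> {q + const s * r | q s. q \<in> K \<and> 0 \<le> s}" "0 \<le> c"
  then obtain q s where "p = q + const s * r" "q \<in> K" "0 \<le> s"
    by blast
  moreover have "const c * (q + const s * r) = const c * q + const (c * s) * r"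
    by (simp add: const_mult_const[symmetric] algebra_simps)
  ultimately show "const c * p \<in> {q + const s * r | q s. q \<in> K \<and> 0 \<le> s}"
    using const_mult_mem \<open>0 \<le> c\<close> by fastforce
qed

lemma separating_value:
  assumes nonneg: "\<And>q. q \<in> K \<Longrightarrow> Poly_Mapping.keys q \<subseteq> D \<Longrightarrow> 0 \<le> Lfun y q"
    and r1: "Poly_Mapping.keys r1 \<subseteq> D" "r1 + xmon b \<in> K"
    and r2: "Poly_Mapping.keys r2 \<subseteq> D" "r2 - xmon b \<in> K"
  shows "\<exists>t. (\<forall>r. Poly_Mapping.keys r \<subseteq> D \<longrightarrow> r + xmon b \<in> K \<longrightarrow> - Lfun y r \<le> t) \<and>
             (\<forall>r. Poly_Mapping.keys r \<subseteq> D \<longrightarrow> r - xmon b \<in> K \<longrightarrow> t \<le> Lfun y r)"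
proof -
  define S1 where "S1 = {- Lfun y r | r. Poly_Mapping.keys r \<subseteq> D \<and> r + xmon b \<in> K}"
  define S2 where "S2 = {Lfun y r | r. Poly_Mapping.keys r \<subseteq> D \<and> r - xmon b \<in> K}"
  have "a \<le> c" if a: "a \<in> S1" and c: "c \<in> S2" for a c
  proof -
    obtain p q where "a = - Lfun y p" "Poly_Mapping.keys p \<subseteq> D" "p + xmon b \<in> K"
      and "c = Lfun y q" "Poly_Mapping.keys q \<subseteq> D" "q - xmon b \<in> K"
      using a c unfolding S1_def S2_def by blast
    moreover from this have "p + q \<in> K"
      using add_mem[of "p + xmon b" "q - xmon b"] by simp
    ultimately show ?thesis
      using nonneg[of "p + q"] keys_add_subset[of p D q] by (simp add: Lfun_add)
  qed
  moreover have "S1 \<noteq> {}" "Lfun y r2 \<in> S2"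
    using r1 r2 by (auto simp: S1_def S2_def)
  ultimately have "\<forall>a\<in>S1. a \<le> Sup S1" "\<forall>c\<in>S2. Sup S1 \<le> c"
    by (auto intro!: cSup_upper cSup_least bdd_aboveI[of S1 "Lfun y r2"])
  then show ?thesis
    unfolding S1_def S2_def by blast
qed

lemma nonneg_at_separating_value:
  assumes nonneg: "\<And>q. q \<in> K \<Longrightarrow> Poly_Mapping.keys q \<subseteq> D \<Longrightarrow> 0 \<le> Lfun y q" and "b \<notin> D"
    and lower: "\<And>r. Poly_Mapping.keys r \<subseteq> D \<Longrightarrow> r + xmon b \<in> K \<Longrightarrow> - Lfun y r \<le> t"
    and upper: "\<And>r. Poly_Mapping.keys r \<subseteq> D \<Longrightarrow> r - xmon b \<in> K \<Longrightarrow> t \<le> Lfun y r"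
    and q: "q \<in> K" "Poly_Mapping.keys q \<subseteq> insert b D"
  shows "0 \<le> Lfun (y(b := t)) q"
proof -
  define \<sigma> where "\<sigma> = Poly_Mapping.lookup q b"
  define r where "r = q - Poly_Mapping.single b \<sigma>"
  have q_eq: "q = r + Poly_Mapping.single b \<sigma>"
    by (simp add: r_def)
  have r_keys: "Poly_Mapping.keys r \<subseteq> D"
    using q(2) by (auto simp: r_def \<sigma>_def in_keys_iff lookup_minus lookup_single when_def split: if_splits)
  then have "b \<notin> Poly_Mapping.keys r"
    using assms(2) by blast
  then have L: "Lfun (y(b := t)) q = Lfun y r + \<sigma> * t"
    by (simp add: q_eq Lfun_add Lfun_upd_notin_keys)
  have scaled: "const c * q = const c * r + Poly_Mapping.single b (c * \<sigma>)" for c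
    by (simp add: q_eq distrib_left const_mult_single)
  have r_keys': "Poly_Mapping.keys (const c * r) \<subseteq> D" for c
    using r_keys keys_const_mult by blast
  consider "0 < \<sigma>" | "\<sigma> < 0" | "\<sigma> = 0"
    by linarith
  then show ?thesis
  proof cases
    case 1
    then have "const (1 / \<sigma>) * r + xmon b \<in> K"
      using const_mult_mem[OF q(1), of "1 / \<sigma>"] by (simp add: scaled xmon_def)
    then have "- (Lfun y r / \<sigma>) \<le> t"
      using lower[OF r_keys'[of "1 / \<sigma>"]] by (simp add: Lfun_const_mult)
    with 1 L show ?thesis
      by (simp add: field_simps)
  next
    case 2
    then have "const (1 / - \<sigma>) * r - xmon b \<in> K"
      using const_mult_mem[OF q(1), of "1 / - \<sigma>"] by (simp add: scaled xmon_def single_uminus)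
    then have "t \<le> Lfun y r / - \<sigma>"
      using upper[OF r_keys'[of "1 / - \<sigma>"]] by (simp add: Lfun_const_mult)
    with 2 L show ?thesis
      by (simp add: field_simps)
  next
    case 3
    with q nonneg[of r] r_keys L show ?thesis
      by (simp add: q_eq)
  qed
qed

lemma extension_step:
  assumes nonneg: "\<And>q. q \<in> K \<Longrightarrow> Poly_Mapping.keys q \<subseteq> D \<Longrightarrow> 0 \<le> Lfun y q"
    and "0 \<in> D" "b \<notin> D" and bounds: "const t0 - xmon b \<in> K" "const t0 + xmon b \<in> K"
  shows "\<exists>t. \<forall>q\<in>K. Poly_Mapping.keys q \<subseteq> insert b D \<longrightarrow> 0 \<le> Lfun (y(b := t)) q"
proof -
  have "Poly_Mapping.keys (const t0) \<subseteq> D"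
    using assms(2) by (simp add: const_def)
  then obtain t where
    "\<And>r. Poly_Mapping.keys r \<subseteq> D \<Longrightarrow> r + xmon b \<in> K \<Longrightarrow> - Lfun y r \<le> t"
    "\<And>r. Poly_Mapping.keys r \<subseteq> D \<Longrightarrow> r - xmon b \<in> K \<Longrightarrow> t \<le> Lfun y r"
    using separating_value[OF nonneg _ bounds(2) _ bounds(1)] by blast
  then show ?thesis
    using nonneg_at_separating_value[OF nonneg assms(3)] by blast
qed

lemma riesz_extension_on_support:
  assumes "finite F"
    and bounded: "\<And>b. b \<in> F \<Longrightarrow> \<exists>t. const t - xmon b \<in> K \<and> const t + xmon b \<in> K"
    and const_nonneg: "\<And>t. const t \<in> K \<Longrightarrow> 0 \<le> t"
  shows "\<exists>y. y 0 = 1 \<and> (\<forall>q\<in>K. Poly_Mapping.keys q \<subseteq> insert 0 F \<longrightarrow> 0 \<le> Lfun y q)"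
  using assms(1,2)
proof (induction F rule: finite_induct)
  case empty
  have "0 \<le> Lfun (\<lambda>_. 1) q" if "q \<in> K" "Poly_Mapping.keys q \<subseteq> {0}" for q
    using keys_const_eq_zero[OF that(2)] const_nonneg[of "Poly_Mapping.lookup q 0"] that(1)
    by (metis Lfun_const mult_1_right)
  then show ?case
    by auto
next
  case (insert b F)
  then obtain y where y: "y 0 = 1" "\<And>q. q \<in> K \<Longrightarrow> Poly_Mapping.keys q \<subseteq> insert 0 F \<Longrightarrow> 0 \<le> Lfun y q"
    by auto
  show ?case
  proof (cases "b = 0")
    case True
    with y show ?thesis
      by auto
  next
    case False
    obtain t0 where "const t0 - xmon b \<in> K" "const t0 + xmon b \<in> K"
      using insert.prems by blast
    with y(2) obtain t where "\<forall>q\<in>K. Poly_Mapping.keys q \<subseteq> insert b (insert 0 F) \<longrightarrow> 0 \<le> Lfun (y(b := t)) q"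
      using extension_step[of "insert 0 F" y b t0] False insert.hyps(2) by blast
    moreover have "(y(b := t)) 0 = 1"
      using y(1) False by simp
    ultimately show ?thesis
      by (metis insert_commute)
  qed
qed

lemma riesz_extension:
  assumes "finite B" "0 \<in> B"
    and "\<And>p. p \<in> K \<Longrightarrow> Poly_Mapping.keys p \<subseteq> B"
    and "\<And>b. b \<in> B \<Longrightarrow> \<exists>t. const t - xmon b \<in> K \<and> const t + xmon b \<in> K"
    and "\<And>t. const t \<in> K \<Longrightarrow> 0 \<le> t"
  shows "\<exists>y. y 0 = 1 \<and> (\<forall>q\<in>K. 0 \<le> Lfun y q)"
  using riesz_extension_on_support[OF assms(1,4,5)] assms(2,3) by (metis insert_absorb)

end

section \<open>The truncated quadratic module and its dual\<close>

locale sos_program =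
  fixes n m l :: nat and g h :: "nat \<Rightarrow> mpoly" and k :: nat
begin

definition sos_poly :: "(nat \<Rightarrow> monom \<Rightarrow> monom \<Rightarrow> real) \<Rightarrow> (nat \<Rightarrow> monom \<Rightarrow> real) \<Rightarrow> mpoly" where
  "sos_poly G u = gram n k (G 0)
     + (\<Sum>i<m. g i * gram n (k - hdeg (g i)) (G (Suc i)))
     + (\<Sum>j<l. h j * lin n (2 * (k - hdeg (h j))) (u j))"

definition psd_grams :: "(nat \<Rightarrow> monom \<Rightarrow> monom \<Rightarrow> real) \<Rightarrow> bool" where
  "psd_grams G \<longleftrightarrow> psd_on (monset n k) (G 0) \<and> (\<forall>i<m. psd_on (monset n (k - hdeg (g i))) (G (Suc i)))"

definition pd_grams :: "(nat \<Rightarrow> monom \<Rightarrow> monom \<Rightarrow> real) \<Rightarrow> bool" where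
  "pd_grams G \<longleftrightarrow> pd_on (monset n k) (G 0) \<and> (\<forall>i<m. pd_on (monset n (k - hdeg (g i))) (G (Suc i)))"

definition qmodule :: "mpoly set" where
  "qmodule = {sos_poly G u | G u. psd_grams G}"

definition qmodule_strict :: "mpoly set" where
  "qmodule_strict = {sos_poly G u | G u. pd_grams G}"

definition mom_feasible :: "(monom \<Rightarrow> real) \<Rightarrow> bool" where
  "mom_feasible y \<longleftrightarrow> psd_on (monset n k) (\<lambda>\<alpha> \<beta>. y (\<alpha> + \<beta>)) \<and> y 0 = 1 \<and>
     (\<forall>i<m. psd_on (monset n (k - hdeg (g i))) (locm (g i) y)) \<and>
     (\<forall>j<l. \<forall>\<alpha>\<in>monset n (k - hdeg (h j)). \<forall>\<beta>\<in>monset n (k - hdeg (h j)). locm (h j) y \<alpha> \<beta> = 0)"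

lemma sos_cert_iff: "sos_cert n f g m h l k \<xi> G u \<longleftrightarrow> f - const \<xi> = sos_poly G u"
  by (simp add: sos_cert_def sos_poly_def)

lemma rho_eq_Sup: "rho n f g m h l k = Sup (ereal ` {\<xi>. f - const \<xi> \<in> qmodule})"
  unfolding rho_def qmodule_def psd_grams_def sos_cert_iff
  by (rule arg_cong[where f = "\<lambda>X. Sup (ereal ` X)"]) blast

lemma tau_eq_Inf: "tau n f g m h l k = Inf (ereal ` {Lfun y f | y. mom_feasible y})"
  by (simp add: tau_def mom_feasible_def)

lemma ex_pd_sos_cert_iff:
  "(\<exists>\<xi> G u. pd_on (monset n k) (G 0) \<and> (\<forall>i<m. pd_on (monset n (k - hdeg (g i))) (G (Suc i))) \<and>
      sos_cert n f g m h l k \<xi> G u) \<longleftrightarrow> (\<exists>\<xi>. f - const \<xi> \<in> qmodule_strict)"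
  by (auto simp: qmodule_strict_def pd_grams_def sos_cert_iff)

lemma qmodule_strict_subset: "qmodule_strict \<subseteq> qmodule"
  by (auto simp: qmodule_strict_def qmodule_def pd_grams_def psd_grams_def pd_imp_psd)

sublocale qmodule: poly_cone qmodule
proof
  fix p q assume "p \<in> qmodule" "q \<in> qmodule"
  then obtain G u G' u' where "psd_grams G" "p = sos_poly G u" "psd_grams G'" "q = sos_poly G' u'"
    by (auto simp: qmodule_def)
  moreover have "sos_poly G u + sos_poly G' u' = sos_poly (\<lambda>j a b. G j a b + G' j a b) (\<lambda>j a. u j a + u' j a)"
    by (simp add: sos_poly_def gram_add lin_add distrib_left sum.distrib algebra_simps)
  ultimately show "p + q \<in> qmodule"
    unfolding qmodule_def psd_grams_def by (blast intro: psd_add)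
next
  fix p and c :: real assume "p \<in> qmodule" "0 \<le> c"
  then obtain G u where "psd_grams G" "p = sos_poly G u"
    by (auto simp: qmodule_def)
  moreover have "const c * sos_poly G u = sos_poly (\<lambda>j a b. c * G j a b) (\<lambda>j a. c * u j a)"
    by (simp add: sos_poly_def gram_scale lin_scale distrib_left sum_distrib_left mult.left_commute)
  ultimately show "const c * p \<in> qmodule"
    using \<open>0 \<le> c\<close> unfolding qmodule_def psd_grams_def by (blast intro: psd_scale)
qed

lemma gram_in_qmodule:
  assumes "psd_on (monset n k) G"
  shows "gram n k G \<in> qmodule"
proof -
  let ?G = "\<lambda>j. if j = 0 then G else (\<lambda>a b. 0)"
  have "gram n k G = sos_poly ?G (\<lambda>_ _. 0)"
    by (simp add: sos_poly_def)
  moreover have "psd_grams ?G"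
    using assms by (simp add: psd_grams_def psd_zero)
  ultimately show ?thesis
    unfolding qmodule_def by blast
qed

lemma zero_in_qmodule: "0 \<in> qmodule"
  using gram_in_qmodule[OF psd_zero] by simp

lemma mult_gram_in_qmodule:
  assumes "i < m" "psd_on (monset n (k - hdeg (g i))) G"
  shows "g i * gram n (k - hdeg (g i)) G \<in> qmodule"
proof -
  let ?G = "\<lambda>j. if j = Suc i then G else (\<lambda>a b. 0)"
  have "(\<Sum>i'<m. g i' * gram n (k - hdeg (g i')) (?G (Suc i'))) =
      (\<Sum>i'<m. if i' = i then g i * gram n (k - hdeg (g i)) G else 0)"
    by (intro sum.cong) auto
  then have "g i * gram n (k - hdeg (g i)) G = sos_poly ?G (\<lambda>_ _. 0)"
    using assms(1) by (simp add: sos_poly_def)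
  moreover have "psd_grams ?G"
    using assms(2) by (simp add: psd_grams_def psd_zero)
  ultimately show ?thesis
    unfolding qmodule_def by blast
qed

lemma mult_lin_in_qmodule:
  assumes "j < l"
  shows "h j * lin n (2 * (k - hdeg (h j))) v \<in> qmodule"
proof -
  let ?u = "\<lambda>j'. if j' = j then v else (\<lambda>_. 0)"
  have "(\<Sum>j'<l. h j' * lin n (2 * (k - hdeg (h j'))) (?u j')) =
      (\<Sum>j'<l. if j' = j then h j * lin n (2 * (k - hdeg (h j))) v else 0)"
    by (intro sum.cong) auto
  then have "h j * lin n (2 * (k - hdeg (h j))) v = sos_poly (\<lambda>_ _ _. 0) ?u"
    using assms by (simp add: sos_poly_def)
  moreover have "psd_grams (\<lambda>_ _ _. 0)"
    by (simp add: psd_grams_def psd_zero)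
  ultimately show ?thesis
    unfolding qmodule_def by blast
qed

lemma Lfun_mult_lin_eq_0:
  assumes "\<forall>\<alpha>\<in>monset n d. \<forall>\<beta>\<in>monset n d. locm q y \<alpha> \<beta> = 0"
  shows "Lfun y (q * lin n (2 * d) v) = 0"
proof -
  have "(\<Sum>\<gamma>\<in>Poly_Mapping.keys q. Poly_Mapping.lookup q \<gamma> * y (\<gamma> + \<alpha>)) = 0" if \<alpha>: "\<alpha> \<in> monset n (2 * d)" for \<alpha>
  proof -
    obtain \<alpha>1 \<alpha>2 where "\<alpha>1 \<in> monset n d" "\<alpha>2 \<in> monset n d" "\<alpha> = \<alpha>1 + \<alpha>2"
      using monset_split[of \<alpha> n d d] \<alpha> by (auto simp: mult_2)
    with assms show ?thesis
      by (auto simp: locm_def add.commute)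
  qed
  then show ?thesis
    by (simp add: Lfun_mult_lin)
qed

lemma Lfun_nonneg_if_mom_feasible:
  assumes "mom_feasible y" "p \<in> qmodule"
  shows "0 \<le> Lfun y p"
proof -
  obtain G u where G: "psd_grams G" and p: "p = sos_poly G u"
    using assms(2) by (auto simp: qmodule_def)
  have "0 \<le> Lfun y (gram n k (G 0))"
    using G assms(1) psd_inner_nonneg[OF finite_monset]
    by (simp add: Lfun_gram psd_grams_def mom_feasible_def)
  moreover have "0 \<le> (\<Sum>i<m. Lfun y (g i * gram n (k - hdeg (g i)) (G (Suc i))))"
    using G assms(1) psd_inner_nonneg[OF finite_monset]
    by (intro sum_nonneg) (simp add: Lfun_mult_gram psd_grams_def mom_feasible_def)
  moreover have "(\<Sum>j<l. Lfun y (h j * lin n (2 * (k - hdeg (h j))) (u j))) = 0"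
    using assms(1) by (intro sum.neutral ballI Lfun_mult_lin_eq_0) (simp add: mom_feasible_def)
  ultimately show ?thesis
    by (simp add: p sos_poly_def Lfun_add Lfun_sum)
qed

(* Conversely, nonnegativity on the rank-one Gram matrices c c^T is positive semidefiniteness of the
   moment and localizing matrices. *)

lemma mom_feasible_if_Lfun_nonneg:
  assumes "y 0 = 1" and nonneg: "\<And>q. q \<in> qmodule \<Longrightarrow> 0 \<le> Lfun y q"
  shows "mom_feasible y"
proof -
  have "0 \<le> quad_form (monset n k) (\<lambda>\<alpha> \<beta>. y (\<alpha> + \<beta>)) c" for c
    using nonneg[OF gram_in_qmodule[OF psd_rank_one[of _ c]]]
    by (simp add: Lfun_gram quad_form_def mult_ac)
  then have "psd_on (monset n k) (\<lambda>\<alpha> \<beta>. y (\<alpha> + \<beta>))"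
    by (simp add: psd_on_iff symm_on_def add.commute)
  moreover have "psd_on (monset n (k - hdeg (g i))) (locm (g i) y)" if "i < m" for i
  proof -
    have "0 \<le> quad_form (monset n (k - hdeg (g i))) (locm (g i) y) c" for c
      using nonneg[OF mult_gram_in_qmodule[OF that psd_rank_one[of _ c]]]
      by (simp add: Lfun_mult_gram quad_form_def mult_ac)
    then show ?thesis
      by (simp add: psd_on_iff symm_on_def locm_def add.commute)
  qed
  moreover have "locm (h j) y \<alpha> \<beta> = 0"
    if "j < l" "\<alpha> \<in> monset n (k - hdeg (h j))" "\<beta> \<in> monset n (k - hdeg (h j))" for j \<alpha> \<beta>
  proof -
    let ?d = "2 * (k - hdeg (h j))"
    have "\<alpha> + \<beta> \<in> monset n ?d"
      using monset_add[OF that(2,3)] by (simp add: mult_2)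
    then have "Lfun y (h j * lin n ?d (\<lambda>\<gamma>. if \<gamma> = \<alpha> + \<beta> then c else 0)) = c * locm (h j) y \<alpha> \<beta>" for c
      by (simp add: Lfun_mult_lin locm_def add.commute if_distrib[of "\<lambda>t. t * _"] finite_monset cong: if_cong)
    then show ?thesis
      using nonneg[OF mult_lin_in_qmodule[OF that(1)], of "\<lambda>\<gamma>. if \<gamma> = \<alpha> + \<beta> then 1 else 0"]
        nonneg[OF mult_lin_in_qmodule[OF that(1)], of "\<lambda>\<gamma>. if \<gamma> = \<alpha> + \<beta> then - 1 else 0"]
      by simp
  qed
  ultimately show ?thesis
    using assms(1) by (simp add: mom_feasible_def)
qed

lemma const_in_qmodule_add_ray_nonneg:
  fixes f :: mpoly
  defines "X \<equiv> {\<xi>. f - const \<xi> \<in> qmodule}"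
  assumes "bdd_above X" "\<xi>0 \<in> X" "q \<in> qmodule" "0 \<le> s" and t: "const t = q + const s * (const (Sup X) - f)"
  shows "0 \<le> t"
proof (rule ccontr)
  assume "\<not> 0 \<le> t"
  have le_Sup: "\<xi> \<le> Sup X" if "f - const \<xi> \<in> qmodule" for \<xi>
    using assms(2) that by (intro cSup_upper) (auto simp: X_def)
  show False
  proof (cases "s = 0")
    case True
    define c where "c = (Sup X - \<xi>0 + 1) / - t"
    have "0 \<le> c"
      using le_Sup[of \<xi>0] assms(3) \<open>\<not> 0 \<le> t\<close> by (auto simp: c_def X_def intro!: divide_nonneg_neg)
    then have "(f - const \<xi>0) + const c * const t \<in> qmodule"
      using assms(3,4) t True by (intro qmodule.add_mem qmodule.const_mult_mem) (auto simp: X_def)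
    moreover have "\<xi>0 - c * t = Sup X + 1"
      using \<open>\<not> 0 \<le> t\<close> by (simp add: c_def)
    then have "(f - const \<xi>0) + const c * const t = f - const (Sup X + 1)"
      using const_diff[of \<xi>0 "c * t"] by (simp add: const_mult_const algebra_simps)
    ultimately show False
      using le_Sup by fastforce
  next
    case False
    with assms(5) have "0 < s"
      by simp
    then have "const (1 / s) * q \<in> qmodule"
      using assms(4) by (intro qmodule.const_mult_mem) auto
    moreover have "q = const t - const s * (const (Sup X) - f)"
      using t by simp
    then have "const (1 / s) * q = const (t / s) - (const (Sup X) - f)"
      using \<open>0 < s\<close> by (simp add: right_diff_distrib const_mult_const mult.assoc[symmetric])
    then have "const (1 / s) * q = f - const (Sup X - t / s)"
      by (simp add: const_diff)
    ultimately have "Sup X - t / s \<le> Sup X"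
      using le_Sup by simp
    with \<open>0 < s\<close> \<open>\<not> 0 \<le> t\<close> show False
      by (simp add: zero_le_divide_iff)
  qed
qed

end

section \<open>Slater's condition and strong duality\<close>

lemma Sup_ereal_eq_Inf_ereal:
  fixes X Y :: "real set"
  assumes "X \<noteq> {}" and le: "\<And>x y. x \<in> X \<Longrightarrow> y \<in> Y \<Longrightarrow> x \<le> y"
    and attained: "bdd_above X \<Longrightarrow> \<exists>y\<in>Y. y \<le> Sup X"
  shows "Sup (ereal ` X) = Inf (ereal ` Y)"
proof (cases "bdd_above X")
  case True
  then obtain y0 where y0: "y0 \<in> Y" "y0 \<le> Sup X"
    using attained by blast
  have Sup_le: "Sup X \<le> y" if "y \<in> Y" for y
    using assms(1) le that by (intro cSup_least) auto
  have "Inf (ereal ` Y) = ereal (Sup X)"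
    using y0 Sup_le by (intro antisym INF_lower2[of y0] INF_greatest) (auto simp: antisym)
  moreover obtain x0 where "x0 \<in> X"
    using assms(1) by blast
  then have "ereal x0 \<le> Sup (ereal ` X)" "Sup (ereal ` X) \<le> ereal (Sup X)"
    using True by (auto intro!: SUP_upper SUP_least cSup_upper)
  then have "Sup (ereal ` X) = ereal (Sup X)"
    by (intro ereal_Sup[symmetric]) auto
  ultimately show ?thesis
    by simp
next
  case False
  then have "Y = {}"
    using le by (auto simp: bdd_above_def)
  moreover have "Sup (ereal ` X) = \<infinity>"
    using False by (intro SUP_PInfty) (meson bdd_above.unfold ereal_less_eq(3) linorder_not_le order_less_imp_le)
  ultimately show ?thesis
    by (simp add: top_ereal_def)
qed

locale archimedean_sos_program = sos_program +
  fixes R :: real and i0 :: nat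
  assumes g_in_vars: "i < m \<Longrightarrow> in_vars n (g i)" and hdeg_g_le: "i < m \<Longrightarrow> hdeg (g i) \<le> k"
    and h_in_vars: "j < l \<Longrightarrow> in_vars n (h j)" and hdeg_h_le: "j < l \<Longrightarrow> hdeg (h j) \<le> k"
    and R_pos: "0 < R" and i0_less: "i0 < m" and g_i0: "g i0 = const R - sqnorm n"
begin

lemma keys_sos_poly: "Poly_Mapping.keys (sos_poly G u) \<subseteq> monset n (2 * k)"
  unfolding sos_poly_def
  by (intro keys_add_subset keys_sum_subset keys_gram keys_mult_gram_subset keys_mult_lin_subset
      g_in_vars hdeg_g_le h_in_vars hdeg_h_le) auto

lemma keys_qmodule: "p \<in> qmodule \<Longrightarrow> Poly_Mapping.keys p \<subseteq> monset n (2 * k)"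
  using keys_sos_poly by (auto simp: qmodule_def)

(* Scaling the identity of ball_identity by s turns the certificate (A, I, ..., I) of p, whose first
   Gram matrix need not be definite, into one for s (R + 1) + p with all Gram matrices positive
   definite. *)

lemma const_plus_in_qmodule_strict:
  assumes pd: "pd_on (monset n k) (\<lambda>a b. A a b + s * diag_mat \<theta> a b)" and "0 \<le> s" "\<And>\<alpha>. 0 \<le> c \<alpha>"
    and ball: "gram n k (diag_mat \<theta>) + g i0 * gram n (k - hdeg (g i0)) (diag_mat c) = const (R + 1)"
    and A: "gram n k A + (\<Sum>i<m. g i * gram n (k - hdeg (g i)) (diag_mat (\<lambda>_. 1))) = p"
  shows "const (s * (R + 1)) + p \<in> qmodule_strict"
proof -
  let ?I = "diag_mat (\<lambda>_. 1)"
  define G where "G j = (if j = 0 then (\<lambda>a b. A a b + s * diag_mat \<theta> a b)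
      else if j = Suc i0 then (\<lambda>a b. ?I a b + s * diag_mat c a b) else ?I)" for j
  have pd_G: "pd_grams G"
    unfolding pd_grams_def G_def
    using pd pd_diag_mat[OF finite_monset] pd_add_psd[OF pd_diag_mat[OF finite_monset]]
      psd_scale[OF psd_diag_mat[OF finite_monset] \<open>0 \<le> s\<close>] assms(3)
    by auto
  have "g i * gram n (k - hdeg (g i)) (G (Suc i)) = g i * gram n (k - hdeg (g i)) ?I
      + (if i = i0 then const s * (g i0 * gram n (k - hdeg (g i0)) (diag_mat c)) else 0)" for i
    by (simp add: G_def gram_add gram_scale algebra_simps)
  then have "sos_poly G (\<lambda>_ _. 0) = gram n k A + const s * gram n k (diag_mat \<theta>)
      + (\<Sum>i<m. g i * gram n (k - hdeg (g i)) ?I) + const s * (g i0 * gram n (k - hdeg (g i0)) (diag_mat c))"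
    using i0_less by (simp add: sos_poly_def G_def gram_add gram_scale sum.distrib)
  also have "\<dots> = (gram n k A + (\<Sum>i<m. g i * gram n (k - hdeg (g i)) ?I))
      + const s * (gram n k (diag_mat \<theta>) + g i0 * gram n (k - hdeg (g i0)) (diag_mat c))"
    by (simp add: algebra_simps)
  also have "\<dots> = const (s * (R + 1)) + p"
    unfolding A ball by (simp add: const_mult_const add.commute)
  finally show ?thesis
    using pd_G unfolding qmodule_strict_def by (metis (mono_tags, lifting) mem_Collect_eq)
qed

lemma eventually_const_plus_in_qmodule_strict:
  assumes p: "Poly_Mapping.keys p \<subseteq> monset n (2 * k)"
  shows "\<forall>\<^sub>F t in at_top. const t + p \<in> qmodule_strict"
proof -
  define \<epsilon> where "\<epsilon> = min 1 (1 / (2 * R))"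
  define c where "c = (\<lambda>\<alpha>. \<epsilon> ^ mdeg \<alpha>)"
  define d where "d = k - hdeg (g i0)"
  define \<theta> where "\<theta> = ball_coeffs n d R c"
  define q0 where "q0 = (\<Sum>i<m. g i * gram n (k - hdeg (g i)) (diag_mat (\<lambda>_. 1)))"
  have "0 < \<epsilon>"
    using R_pos by (simp add: \<epsilon>_def)
  have d: "n = 0 \<or> Suc d = k"
    using hdeg_ball_poly[of n R] hdeg_g_le[OF i0_less] g_i0 by (cases "n = 0") (auto simp: d_def)
  then have "monset n (Suc d) \<subseteq> monset n k"
    by (auto simp: monset_0)
  then have "const (R + 1) - g i0 * gram n (k - hdeg (g i0)) (diag_mat c) = gram n k (diag_mat \<theta>)"
    using ball_identity[of n d k R c] g_i0 by (simp add: \<theta>_def d_def)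
  then have ball: "gram n k (diag_mat \<theta>) + g i0 * gram n (k - hdeg (g i0)) (diag_mat c) = const (R + 1)"
    by (metis diff_add_cancel)
  have "\<epsilon> ^ k / 2 \<le> \<theta> \<beta>" if "\<beta> \<in> monset n k" for \<beta>
    using ball_coeffs_lower_bound[OF R_pos d that] by (simp add: \<theta>_def c_def \<epsilon>_def)
  moreover have "Poly_Mapping.keys q0 \<subseteq> monset n (2 * k)"
    unfolding q0_def by (intro keys_sum_subset keys_mult_gram_subset g_in_vars hdeg_g_le) auto
  then obtain A where A: "symm_on (monset n k) A" "gram n k A = p - q0"
    using exists_symm_gram[OF keys_diff_subset[OF p]] by blast
  ultimately have "\<forall>\<^sub>F s in at_top. pd_on (monset n k) (\<lambda>a b. A a b + s * diag_mat \<theta> a b)"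
    using \<open>0 < \<epsilon>\<close> by (intro eventually_pd_plus_diag_mat[OF finite_monset A(1), where t = "\<epsilon> ^ k / 2"]) auto
  then have "\<forall>\<^sub>F s in at_top. const (s * (R + 1)) + p \<in> qmodule_strict"
    using eventually_ge_at_top[of 0]
  proof eventually_elim
    case (elim s)
    show ?case
      by (rule const_plus_in_qmodule_strict[OF elim(1,2) _ ball]) (use A(2) \<open>0 < \<epsilon>\<close> in \<open>auto simp: q0_def c_def\<close>)
  qed
  moreover have "filterlim (\<lambda>t. t * (1 / (R + 1))) at_top at_top"
    using R_pos by (intro filterlim_at_top_mult_tendsto_pos[OF tendsto_const _ filterlim_ident]) simp
  ultimately have "\<forall>\<^sub>F t in at_top. const (t * (1 / (R + 1)) * (R + 1)) + p \<in> qmodule_strict"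
    by (rule eventually_compose_filterlim)
  then show ?thesis
    using R_pos by simp
qed

lemma mom_feasible_attains_Sup:
  fixes f :: mpoly
  defines "X \<equiv> {\<xi>. f - const \<xi> \<in> qmodule}"
  assumes f: "Poly_Mapping.keys f \<subseteq> monset n (2 * k)" and "\<xi>0 \<in> X" "bdd_above X"
  shows "\<exists>y. mom_feasible y \<and> Lfun y f \<le> Sup X"
proof -
  define K where "K = {q + const s * (const (Sup X) - f) | q s. q \<in> qmodule \<and> 0 \<le> s}"
  interpret K: poly_cone K
    unfolding K_def by (rule qmodule.poly_cone_add_ray)
  have qmodule_K: "q \<in> K" if "q \<in> qmodule" for q
    unfolding K_def using that by (intro CollectI exI[of _ q] exI[of _ 0]) simp
  have "\<exists>y. y 0 = 1 \<and> (\<forall>q\<in>K. 0 \<le> Lfun y q)"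
  proof (rule K.riesz_extension[OF finite_monset zero_in_monset])
    fix p assume "p \<in> K"
    then obtain q s where p: "p = q + const s * (const (Sup X) - f)" and "q \<in> qmodule"
      unfolding K_def by blast
    have "Poly_Mapping.keys (const s * (const (Sup X) - f)) \<subseteq> monset n (2 * k)"
      by (rule subset_trans[OF keys_const_mult keys_diff_subset[OF keys_const_subset_monset f]])
    then show "Poly_Mapping.keys p \<subseteq> monset n (2 * k)"
      unfolding p by (rule keys_add_subset[OF keys_qmodule[OF \<open>q \<in> qmodule\<close>]])
  next
    fix b assume "b \<in> monset n (2 * k)"
    then have "Poly_Mapping.keys (xmon b) \<subseteq> monset n (2 * k)" "Poly_Mapping.keys (- xmon b) \<subseteq> monset n (2 * k)"
      by (simp_all add: xmon_def)
    then have "\<forall>\<^sub>F t in at_top. const t + - xmon b \<in> qmodule_strict \<and> const t + xmon b \<in> qmodule_strict"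
      by (intro eventually_conj eventually_const_plus_in_qmodule_strict)
    then obtain t where "const t - xmon b \<in> qmodule_strict" "const t + xmon b \<in> qmodule_strict"
      by (auto simp: eventually_at_top_linorder)
    then show "\<exists>t. const t - xmon b \<in> K \<and> const t + xmon b \<in> K"
      using qmodule_strict_subset qmodule_K by blast
  next
    fix t assume "const t \<in> K"
    then show "0 \<le> t"
      unfolding K_def using const_in_qmodule_add_ray_nonneg[of f, folded X_def] assms(3,4) by blast
  qed
  then obtain y where y: "y 0 = 1" "\<And>q. q \<in> K \<Longrightarrow> 0 \<le> Lfun y q"
    by blast
  have "const (Sup X) - f \<in> K"
    unfolding K_def by (intro CollectI exI[of _ 0] exI[of _ 1]) (simp add: zero_in_qmodule)
  then have "Lfun y f \<le> Sup X"
    using y by (fastforce simp: Lfun_diff Lfun_const)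
  with y qmodule_K show ?thesis
    by (blast intro: mom_feasible_if_Lfun_nonneg)
qed

lemma slater_point:
  assumes "Poly_Mapping.keys f \<subseteq> monset n (2 * k)"
  shows "\<exists>\<xi>. f - const \<xi> \<in> qmodule_strict"
proof -
  obtain t where "const t + f \<in> qmodule_strict"
    using eventually_const_plus_in_qmodule_strict[OF assms] by (auto simp: eventually_at_top_linorder)
  then have "f - const (- t) \<in> qmodule_strict"
    by (simp add: const_uminus add.commute)
  then show ?thesis ..
qed

lemma rho_eq_tau:
  assumes f: "Poly_Mapping.keys f \<subseteq> monset n (2 * k)"
  shows "rho n f g m h l k = tau n f g m h l k"
  unfolding rho_eq_Sup tau_eq_Inf
proof (rule Sup_ereal_eq_Inf_ereal)
  show "{\<xi>. f - const \<xi> \<in> qmodule} \<noteq> {}"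
    using slater_point[OF f] qmodule_strict_subset by blast
  then obtain \<xi>0 where "\<xi>0 \<in> {\<xi>. f - const \<xi> \<in> qmodule}"
    by blast
  then show "bdd_above {\<xi>. f - const \<xi> \<in> qmodule} \<Longrightarrow>
      \<exists>v\<in>{Lfun y f | y. mom_feasible y}. v \<le> Sup {\<xi>. f - const \<xi> \<in> qmodule}"
    using mom_feasible_attains_Sup[OF f] by blast
next
  fix \<xi> v assume "\<xi> \<in> {\<xi>. f - const \<xi> \<in> qmodule}" "v \<in> {Lfun y f | y. mom_feasible y}"
  then obtain y where "f - const \<xi> \<in> qmodule" "mom_feasible y" "v = Lfun y f"
    by blast
  then show "\<xi> \<le> v"
    using Lfun_nonneg_if_mom_feasible[of y "f - const \<xi>"] by (simp add: Lfun_diff Lfun_const mom_feasible_def)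
qed

end

lemma kmin_le_iff:
  "kmin f g m h l \<le> k \<longleftrightarrow> hdeg f \<le> k \<and> (\<forall>i<m. hdeg (g i) \<le> k) \<and> (\<forall>j<l. hdeg (h j) \<le> k)"
  by (auto simp: kmin_def)

theorem corollary1:
  fixes n m l :: nat and f :: mpoly and g h :: "nat \<Rightarrow> mpoly" and R :: real
  assumes "in_vars n f"
    and "\<forall>i<m. in_vars n (g i)"
    and "\<forall>j<l. in_vars n (h j)"
    and "R > 0"
    and "const R - sqnorm n \<in> g ` {..<m}"
  shows "\<forall>k. k \<ge> kmin f g m h l \<longrightarrow>
           (\<exists>\<xi> G u. pd_on (monset n k) (G 0) \<and>
              (\<forall>i<m. pd_on (monset n (k - hdeg (g i))) (G (Suc i))) \<and>
              sos_cert n f g m h l k \<xi> G u)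
           \<and> rho n f g m h l k = tau n f g m h l k"
proof (intro allI impI)
  fix k assume "k \<ge> kmin f g m h l"
  then have deg: "hdeg f \<le> k" "\<forall>i<m. hdeg (g i) \<le> k" "\<forall>j<l. hdeg (h j) \<le> k"
    by (simp_all add: kmin_le_iff)
  obtain i0 where "i0 < m" "g i0 = const R - sqnorm n"
    using assms(5) by auto
  then interpret archimedean_sos_program n m l g h k R i0
    using assms(2-4) deg by unfold_locales auto
  have f: "Poly_Mapping.keys f \<subseteq> monset n (2 * k)"
    using keys_subset_monset_hdeg[OF assms(1)] monset_mono[of "2 * hdeg f" "2 * k" n] deg(1) by simp
  show "(\<exists>\<xi> G u. pd_on (monset n k) (G 0) \<and>
          (\<forall>i<m. pd_on (monset n (k - hdeg (g i))) (G (Suc i))) \<and> sos_cert n f g m h l k \<xi> G u)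
        \<and> rho n f g m h l k = tau n f g m h l k"
    using slater_point[OF f] rho_eq_tau[OF f] ex_pd_sos_cert_iff[of f] by blast
qed

end
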